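(* Let $\mathcal A$ be an abelian category and let $0\to F\to M\to C\to 0$ be a fully invariant short exact sequence in $\mathcal A$. (1) Assume that $M$ is (strongly) self-$F$-split. Then: (i) for every (fully invariant) direct summand $K$ of $M$, $F\cap K$ is a (fully invariant) direct summand of $M$; (ii) $M$ has SIP for (fully invariant) direct summands containing $F$. (2) Assume that $M$ is dual (strongly) self-$F$-split. Then: (i) for every (fully invariant) direct summand $K$ of $M$, $F+K$ is a (fully invariant) direct summand of $M$; (ii) $M$ has SSP for (fully invariant) direct summands contained in $F$.
   Context: Convention: each statement containing parenthetical words holds in two versions: one obtained by deleting all parenthetical words and one obtained by keeping all of them. Let $\mathcal A$ be an abelian category. A morphism $s:X\to Y$ is a section if $ts=1_X$ for some $t$, and a retraction if $st=1_Y$ for some $t$. A monomorphism $i:K\to M$ is fully invariant if for every morphism $h:M\to M$ there is $\alpha:K\to K$ with $hi=i\alpha$; an epimorphism $d:M\to C$ is fully coinvariant if for every $h:M\to M$ there is $\beta:C\to C$ with $dh=\beta d$. A subobject is fully invariant if its inclusion is. A short exact sequence $0\to F\xrightarrow{i}N\xrightarrow{d}C\to 0$ is fully invariant if $i$ is fully invariant. A (fully invariant) direct summand is a subobject whose inclusion is a (fully invariant) section. For an object $M$ and a fully invariant short exact sequence $0\to F\xrightarrow{i}N\xrightarrow{d}C\to 0$: $N$ is (strongly) $M$-$F$-split if for every morphism $g:M\to N$, $\ker(dg)$ is a (fully invariant) section; $N$ is dual (strongly) $M$-$F$-split if for every morphism $g:N\to M$, $\mathrm{coker}(gi)$ is a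 (fully coinvariant) retraction. Self-versions: take $M=N$. An object $M$ has the summand intersection property (SIP) for a class $\mathcal C$ of direct summands of $M$ if the intersection of any finite family of members of $\mathcal C$ belongs to $\mathcal C$; it has the summand sum property (SSP) for $\mathcal C$ if the sum of any finite family of members of $\mathcal C$ belongs to $\mathcal C$. *)

theory Defs
  imports Main
begin

text \<open>A category is given by a type of objects and a type of morphisms
(every element of the morphism type is a morphism) with domain, codomain,
composition (Comp C g f is g after f, meaningful when Cod f = Dom g) and identities.\<close>

record ('o, 'm) cat =
  Dom  :: "'m \<Rightarrow> 'o"
  Cod  :: "'m \<Rightarrow> 'o"
  Comp :: "'m \<Rightarrow> 'm \<Rightarrow> 'm"
  Id   :: "'o \<Rightarrow> 'm"

definition hom :: "('o,'m) cat \<Rightarrow> 'o \<Rightarrow> 'o \<Rightarrow> 'm \<Rightarrow> bool" where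
  "hom C a b f \<longleftrightarrow> Dom C f = a \<and> Cod C f = b"

definition category :: "('o,'m) cat \<Rightarrow> bool" where
  "category C \<longleftrightarrow>
     (\<forall>a. Dom C (Id C a) = a \<and> Cod C (Id C a) = a) \<and>
     (\<forall>f g. Cod C f = Dom C g \<longrightarrow>
        Dom C (Comp C g f) = Dom C f \<and> Cod C (Comp C g f) = Cod C g) \<and>
     (\<forall>f g h. Cod C f = Dom C g \<and> Cod C g = Dom C h \<longrightarrow>
        Comp C h (Comp C g f) = Comp C (Comp C h g) f) \<and>
     (\<forall>f. Comp C f (Id C (Dom C f)) = f \<and> Comp C (Id C (Cod C f)) f = f)"

definition zero_obj :: "('o,'m) cat \<Rightarrow> 'o \<Rightarrow> bool" where
  "zero_obj C z \<longleftrightarrow> (\<forall>a. (\<exists>!f. hom C z a f) \<and> (\<exists>!f. hom C a z f))"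

definition zero_mor :: "('o,'m) cat \<Rightarrow> 'm \<Rightarrow> bool" where
  "zero_mor C f \<longleftrightarrow> (\<exists>z g h. zero_obj C z \<and> hom C (Dom C f) z g \<and> hom C z (Cod C f) h
                        \<and> f = Comp C h g)"

definition mono :: "('o,'m) cat \<Rightarrow> 'm \<Rightarrow> bool" where
  "mono C f \<longleftrightarrow> (\<forall>g h. Cod C g = Dom C f \<and> Cod C h = Dom C f \<and> Dom C g = Dom C h
                        \<and> Comp C f g = Comp C f h \<longrightarrow> g = h)"

definition epi :: "('o,'m) cat \<Rightarrow> 'm \<Rightarrow> bool" where
  "epi C f \<longleftrightarrow> (\<forall>g h. Dom C g = Cod C f \<and> Dom C h = Cod C f \<and> Cod C g = Cod C h
                        \<and> Comp C g f = Comp C h f \<longrightarrow> g = h)"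

definition is_kernel :: "('o,'m) cat \<Rightarrow> 'm \<Rightarrow> 'm \<Rightarrow> bool" where
  "is_kernel C k f \<longleftrightarrow> Cod C k = Dom C f \<and> zero_mor C (Comp C f k) \<and>
     (\<forall>g. Cod C g = Dom C f \<and> zero_mor C (Comp C f g) \<longrightarrow>
        (\<exists>!u. hom C (Dom C g) (Dom C k) u \<and> Comp C k u = g))"

definition is_cokernel :: "('o,'m) cat \<Rightarrow> 'm \<Rightarrow> 'm \<Rightarrow> bool" where
  "is_cokernel C c f \<longleftrightarrow> Dom C c = Cod C f \<and> zero_mor C (Comp C c f) \<and>
     (\<forall>g. Dom C g = Cod C f \<and> zero_mor C (Comp C g f) \<longrightarrow>
        (\<exists>!u. hom C (Cod C c) (Cod C g) u \<and> Comp C u c = g))"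

definition has_products :: "('o,'m) cat \<Rightarrow> bool" where
  "has_products C \<longleftrightarrow> (\<forall>a b. \<exists>p p1 p2. hom C p a p1 \<and> hom C p b p2 \<and>
     (\<forall>x f g. hom C x a f \<and> hom C x b g \<longrightarrow>
        (\<exists>!u. hom C x p u \<and> Comp C p1 u = f \<and> Comp C p2 u = g)))"

definition has_coproducts :: "('o,'m) cat \<Rightarrow> bool" where
  "has_coproducts C \<longleftrightarrow> (\<forall>a b. \<exists>s s1 s2. hom C a s s1 \<and> hom C b s s2 \<and>
     (\<forall>x f g. hom C a x f \<and> hom C b x g \<longrightarrow>
        (\<exists>!u. hom C s x u \<and> Comp C u s1 = f \<and> Comp C u s2 = g)))"

definition abelian_cat :: "('o,'m) cat \<Rightarrow> bool" where
  "abelian_cat C \<longleftrightarrow> category C \<and> (\<exists>z. zero_obj C z) \<and> has_products C \<and> has_coproducts C \<and>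
     (\<forall>f. \<exists>k. is_kernel C k f) \<and> (\<forall>f. \<exists>c. is_cokernel C c f) \<and>
     (\<forall>f. mono C f \<longrightarrow> (\<exists>g. is_kernel C f g)) \<and>
     (\<forall>f. epi C f \<longrightarrow> (\<exists>g. is_cokernel C f g))"

definition short_exact :: "('o,'m) cat \<Rightarrow> 'm \<Rightarrow> 'm \<Rightarrow> bool" where
  "short_exact C i d \<longleftrightarrow> Cod C i = Dom C d \<and> mono C i \<and> epi C d \<and>
     is_kernel C i d \<and> is_cokernel C d i"

definition is_section :: "('o,'m) cat \<Rightarrow> 'm \<Rightarrow> bool" where
  "is_section C s \<longleftrightarrow> (\<exists>t. hom C (Cod C s) (Dom C s) t \<and> Comp C t s = Id C (Dom C s))"

definition is_retraction :: "('o,'m) cat \<Rightarrow> 'm \<Rightarrow> bool" where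
  "is_retraction C s \<longleftrightarrow> (\<exists>t. hom C (Cod C s) (Dom C s) t \<and> Comp C s t = Id C (Cod C s))"

definition fully_invariant :: "('o,'m) cat \<Rightarrow> 'm \<Rightarrow> bool" where
  "fully_invariant C i \<longleftrightarrow> mono C i \<and>
     (\<forall>h. hom C (Cod C i) (Cod C i) h \<longrightarrow>
        (\<exists>\<alpha>. hom C (Dom C i) (Dom C i) \<alpha> \<and> Comp C h i = Comp C i \<alpha>))"

definition fully_coinvariant :: "('o,'m) cat \<Rightarrow> 'm \<Rightarrow> bool" where
  "fully_coinvariant C d \<longleftrightarrow> epi C d \<and>
     (\<forall>h. hom C (Dom C d) (Dom C d) h \<longrightarrow>
        (\<exists>\<beta>. hom C (Cod C d) (Cod C d) \<beta> \<and> Comp C d h = Comp C \<beta> d))"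

text \<open>The Boolean flag b encodes the parenthetical convention:
b = False deletes the parenthetical words, b = True keeps them
("strongly", "fully invariant", "fully coinvariant").\<close>

definition self_F_split :: "bool \<Rightarrow> ('o,'m) cat \<Rightarrow> 'm \<Rightarrow> 'm \<Rightarrow> bool" where
  "self_F_split b C i d \<longleftrightarrow>
     (\<forall>g k. hom C (Cod C i) (Cod C i) g \<and> is_kernel C k (Comp C d g) \<longrightarrow>
        is_section C k \<and> (b \<longrightarrow> fully_invariant C k))"

definition dual_self_F_split :: "bool \<Rightarrow> ('o,'m) cat \<Rightarrow> 'm \<Rightarrow> 'm \<Rightarrow> bool" where
  "dual_self_F_split b C i d \<longleftrightarrow>
     (\<forall>g c. hom C (Cod C i) (Cod C i) g \<and> is_cokernel C c (Comp C g i) \<longrightarrow>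
        is_retraction C c \<and> (b \<longrightarrow> fully_coinvariant C c))"

text \<open>Subobjects of M are represented by monomorphisms with codomain M.\<close>

definition factors_through :: "('o,'m) cat \<Rightarrow> 'm \<Rightarrow> 'm \<Rightarrow> bool" where
  "factors_through C a k \<longleftrightarrow> Cod C a = Cod C k \<and>
     (\<exists>u. hom C (Dom C a) (Dom C k) u \<and> Comp C k u = a)"

definition direct_summand :: "bool \<Rightarrow> ('o,'m) cat \<Rightarrow> 'o \<Rightarrow> 'm \<Rightarrow> bool" where
  "direct_summand b C M k \<longleftrightarrow> Cod C k = M \<and> is_section C k \<and> (b \<longrightarrow> fully_invariant C k)"

definition is_intersection :: "('o,'m) cat \<Rightarrow> 'o \<Rightarrow> 'i set \<Rightarrow> ('i \<Rightarrow> 'm) \<Rightarrow> 'm \<Rightarrow> bool" where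
  "is_intersection C M I ks j \<longleftrightarrow> mono C j \<and> Cod C j = M \<and>
     (\<forall>x\<in>I. factors_through C j (ks x)) \<and>
     (\<forall>t. mono C t \<and> Cod C t = M \<and> (\<forall>x\<in>I. factors_through C t (ks x)) \<longrightarrow>
        factors_through C t j)"

definition is_sum :: "('o,'m) cat \<Rightarrow> 'o \<Rightarrow> 'i set \<Rightarrow> ('i \<Rightarrow> 'm) \<Rightarrow> 'm \<Rightarrow> bool" where
  "is_sum C M I ks s \<longleftrightarrow> mono C s \<and> Cod C s = M \<and>
     (\<forall>x\<in>I. factors_through C (ks x) s) \<and>
     (\<forall>t. mono C t \<and> Cod C t = M \<and> (\<forall>x\<in>I. factors_through C (ks x) t) \<longrightarrow>
        factors_through C s t)"

end

theory Submission imports Defs begin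

text \<open>
  For (1), let \<open>e = k \<cdot> t\<close> be the idempotent of a summand \<open>K\<close> and let \<open>p\<close> be an endomorphism
  of \<open>M\<close> such that \<open>p y \<in> F\<close> forces \<open>y \<in> L\<close> while \<open>p\<close> maps \<open>K \<inter> L\<close> into \<open>F\<close>. Self-\<open>F\<close>-splitness
  makes \<open>X = ker (d \<cdot> p \<cdot> e)\<close> a summand; \<open>K \<inter> L \<subseteq> X\<close> and \<open>e\<close> maps \<open>X\<close> back into \<open>K \<inter> L\<close>
  fixing \<open>K \<inter> L\<close>, so \<open>K \<inter> L\<close> is a retract of \<open>X\<close>. Taking \<open>p = 1, L = F\<close> gives \<open>F \<inter> K\<close>;
  taking for \<open>p\<close> the projection along a summand \<open>L \<supseteq> F\<close> gives \<open>K \<inter> L\<close>, whence SIP by induction.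

  For (2), dually, if \<open>q : M \<rightarrow> M/K\<close> has a section \<open>s\<close> and the cokernel of \<open>s \<cdot> q \<cdot> w\<close> splits,
  then \<open>M \<rightarrow> M/K \<rightarrow> M/(K + W)\<close> is a split epimorphism, so its kernel \<open>K + W\<close> is a summand.
  Here \<open>s \<cdot> q\<close> is the endomorphism to which dual self-\<open>F\<close>-splitness is applied (\<open>W = F\<close>), or
  \<open>s \<cdot> q \<cdot> e\<^sub>W\<close> for a summand \<open>W \<subseteq> F\<close>, which gives SSP by induction. Full invariance passes to
  intersections and sums.

  Freyd's axioms provide no additive structure, so splittings cannot be built from \<open>1 - e\<close>.
  Instead, a morphism with zero kernel is shown to be monic via equalizers built from products,
  and the complement of a summand is then seen to map isomorphically onto its cokernel.
\<close>

section \<open>Opposite category\<close>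

definition op_cat :: "('o,'m) cat \<Rightarrow> ('o,'m) cat" where
  "op_cat C = \<lparr>Dom = Cod C, Cod = Dom C, Comp = (\<lambda>g f. Comp C f g), Id = Id C\<rparr>"

lemma op_cat_simps [simp]:
  "Dom (op_cat C) = Cod C" "Cod (op_cat C) = Dom C"
  "Comp (op_cat C) g f = Comp C f g" "Id (op_cat C) = Id C"
  by (simp_all add: op_cat_def)

lemma hom_op_cat [simp]: "hom (op_cat C) a b = hom C b a"
  by (auto simp: hom_def)

lemma zero_obj_op_cat [simp]: "zero_obj (op_cat C) z = zero_obj C z"
  unfolding zero_obj_def by (simp only: hom_op_cat) blast

lemma zero_mor_op_cat [simp]: "zero_mor (op_cat C) f = zero_mor C f"
  unfolding zero_mor_def by auto

lemma mono_op_cat [simp]: "mono (op_cat C) f = epi C f"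
  and epi_op_cat [simp]: "epi (op_cat C) f = mono C f"
  unfolding mono_def epi_def by auto

lemma is_kernel_op_cat [simp]: "is_kernel (op_cat C) k = is_cokernel C k"
  and is_cokernel_op_cat [simp]: "is_cokernel (op_cat C) k = is_kernel C k"
  unfolding is_kernel_def is_cokernel_def by (auto simp: fun_eq_iff)

lemma is_section_op_cat [simp]: "is_section (op_cat C) s = is_retraction C s"
  unfolding is_section_def is_retraction_def by auto

lemma abelian_cat_op_cat: "abelian_cat C \<Longrightarrow> abelian_cat (op_cat C)"
  unfolding abelian_cat_def category_def has_products_def has_coproducts_def by auto

section \<open>Abelian categories\<close>

locale abelian_category =
  fixes C :: "('o,'m) cat"
  assumes abelian: "abelian_cat C"
begin

abbreviation dm where "dm \<equiv> Dom C"
abbreviation cdm where "cdm \<equiv> Cod C"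
abbreviation comp (infixr "\<cdot>" 55) where "g \<cdot> f \<equiv> Comp C g f"
abbreviation ide where "ide \<equiv> Id C"
abbreviation is_zero where "is_zero \<equiv> zero_mor C"

lemma abelian_category_op_cat: "abelian_category (op_cat C)"
  by unfold_locales (rule abelian_cat_op_cat[OF abelian])

lemma category: "category C"
  using abelian unfolding abelian_cat_def by auto

lemma dom_id [simp]: "dm (ide a) = a"
  and cod_id [simp]: "cdm (ide a) = a"
  using category unfolding category_def by auto

lemma dom_comp [simp]: "cdm f = dm g \<Longrightarrow> dm (g \<cdot> f) = dm f"
  and cod_comp [simp]: "cdm f = dm g \<Longrightarrow> cdm (g \<cdot> f) = cdm g"
  using category unfolding category_def by auto

lemma comp_assoc: "cdm f = dm g \<Longrightarrow> cdm g = dm h \<Longrightarrow> (h \<cdot> g) \<cdot> f = h \<cdot> (g \<cdot> f)"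
  using category unfolding category_def by auto

lemma comp_id [simp]: "dm f = a \<Longrightarrow> f \<cdot> ide a = f"
  and id_comp [simp]: "cdm f = a \<Longrightarrow> ide a \<cdot> f = f"
  using category unfolding category_def by auto

lemma ex_zero_obj: "\<exists>z. zero_obj C z"
  using abelian unfolding abelian_cat_def by auto

lemma zero_obj_unique_into: "zero_obj C z \<Longrightarrow> dm a = dm b \<Longrightarrow> cdm a = z \<Longrightarrow> cdm b = z \<Longrightarrow> a = b"
  and zero_obj_unique_from: "zero_obj C z \<Longrightarrow> cdm a = cdm b \<Longrightarrow> dm a = z \<Longrightarrow> dm b = z \<Longrightarrow> a = b"
  unfolding zero_obj_def hom_def by metis+

lemma zero_obj_ex_into: "zero_obj C z \<Longrightarrow> \<exists>g. dm g = a \<and> cdm g = z"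
  and zero_obj_ex_from: "zero_obj C z \<Longrightarrow> \<exists>g. dm g = z \<and> cdm g = a"
  unfolding zero_obj_def hom_def by metis+

lemma is_zeroI: "zero_obj C z \<Longrightarrow> cdm g = z \<Longrightarrow> dm h = z \<Longrightarrow> is_zero (h \<cdot> g)"
  unfolding zero_mor_def hom_def by auto

lemma is_zeroE:
  assumes "is_zero f"
  obtains z g h where "zero_obj C z" "dm g = dm f" "cdm g = z" "dm h = z" "cdm h = cdm f" "f = h \<cdot> g"
  using assms unfolding zero_mor_def hom_def by auto

lemma ex_zero_mor: "\<exists>f. dm f = a \<and> cdm f = b \<and> is_zero f"
proof -
  obtain z where z: "zero_obj C z" using ex_zero_obj by auto
  obtain g h where "dm g = a" "cdm g = z" "dm h = z" "cdm h = b"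
    using zero_obj_ex_into[OF z] zero_obj_ex_from[OF z] by metis
  then show ?thesis using is_zeroI[OF z] by (intro exI[of _ "h \<cdot> g"]) auto
qed

lemma zero_mor_unique:
  assumes "is_zero f" "is_zero g" "dm f = dm g" "cdm f = cdm g"
  shows "f = g"
proof -
  obtain z1 g1 h1 where 1: "zero_obj C z1" "dm g1 = dm f" "cdm g1 = z1" "dm h1 = z1" "cdm h1 = cdm f"
    "f = h1 \<cdot> g1"
    using assms(1) by (rule is_zeroE)
  obtain z2 g2 h2 where 2: "zero_obj C z2" "dm g2 = dm g" "cdm g2 = z2" "dm h2 = z2" "cdm h2 = cdm g"
    "g = h2 \<cdot> g2"
    using assms(2) by (rule is_zeroE)
  obtain \<phi> where \<phi>: "dm \<phi> = z1" "cdm \<phi> = z2" using zero_obj_ex_from[OF 1(1)] by auto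
  have "\<phi> \<cdot> g1 = g2" by (rule zero_obj_unique_into[OF 2(1)]) (use 1 2 \<phi> assms in auto)
  moreover have "h2 \<cdot> \<phi> = h1" by (rule zero_obj_unique_from[OF 1(1)]) (use 1 2 \<phi> assms in auto)
  ultimately show ?thesis using 1 2 \<phi> comp_assoc[of g1 \<phi> h2] by simp
qed

lemma comp_is_zero:
  assumes "is_zero f" "cdm f = dm g"
  shows "is_zero (g \<cdot> f)"
proof -
  obtain z a b where "zero_obj C z" "dm a = dm f" "cdm a = z" "dm b = z" "cdm b = cdm f" "f = b \<cdot> a"
    using assms(1) by (rule is_zeroE)
  moreover from this have "g \<cdot> f = (g \<cdot> b) \<cdot> a" using assms(2) comp_assoc[of a b g] by simp
  ultimately show ?thesis using assms(2) is_zeroI[of z a "g \<cdot> b"] by simp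
qed

lemma is_zero_comp:
  assumes "is_zero g" "cdm f = dm g"
  shows "is_zero (g \<cdot> f)"
proof -
  obtain z a b where "zero_obj C z" "dm a = dm g" "cdm a = z" "dm b = z" "cdm b = cdm g" "g = b \<cdot> a"
    using assms(1) by (rule is_zeroE)
  moreover from this have "g \<cdot> f = b \<cdot> (a \<cdot> f)" using assms(2) comp_assoc[of f a b] by simp
  ultimately show ?thesis using assms(2) is_zeroI[of z "a \<cdot> f" b] by simp
qed

lemma monoI:
  "(\<And>a b. cdm a = dm m \<Longrightarrow> cdm b = dm m \<Longrightarrow> dm a = dm b \<Longrightarrow> m \<cdot> a = m \<cdot> b \<Longrightarrow> a = b) \<Longrightarrow> mono C m"
  unfolding mono_def by blast

lemma epiI:
  "(\<And>a b. dm a = cdm m \<Longrightarrow> dm b = cdm m \<Longrightarrow> cdm a = cdm b \<Longrightarrow> a \<cdot> m = b \<cdot> m \<Longrightarrow> a = b) \<Longrightarrow> epi C m"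
  unfolding epi_def by blast

lemma mono_cancel:
  "mono C m \<Longrightarrow> m \<cdot> a = m \<cdot> b \<Longrightarrow> cdm a = dm m \<Longrightarrow> cdm b = dm m \<Longrightarrow> dm a = dm b \<Longrightarrow> a = b"
  unfolding mono_def by blast

lemma epi_cancel:
  "epi C e \<Longrightarrow> a \<cdot> e = b \<cdot> e \<Longrightarrow> dm a = cdm e \<Longrightarrow> dm b = cdm e \<Longrightarrow> cdm a = cdm b \<Longrightarrow> a = b"
  unfolding epi_def by blast

lemma mono_comp:
  assumes "mono C f" "mono C g" "cdm g = dm f"
  shows "mono C (f \<cdot> g)"
proof (rule monoI)
  fix a b assume a: "cdm a = dm (f \<cdot> g)" "cdm b = dm (f \<cdot> g)" "dm a = dm b"
    "(f \<cdot> g) \<cdot> a = (f \<cdot> g) \<cdot> b"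
  then have "f \<cdot> (g \<cdot> a) = f \<cdot> (g \<cdot> b)" using assms by (simp add: comp_assoc)
  then have "g \<cdot> a = g \<cdot> b" using mono_cancel[OF assms(1)] a assms by auto
  then show "a = b" using mono_cancel[OF assms(2)] a assms by auto
qed

lemma mono_if_left_inverse:
  assumes "r \<cdot> s = ide (dm s)" "cdm s = dm r"
  shows "mono C s"
proof (rule monoI)
  fix a b assume ab: "cdm a = dm s" "cdm b = dm s" "s \<cdot> a = s \<cdot> b"
  have "a = (r \<cdot> s) \<cdot> a" using assms ab by simp
  also have "\<dots> = (r \<cdot> s) \<cdot> b" using assms ab comp_assoc[of a s r] comp_assoc[of b s r] by simp
  also have "\<dots> = b" using assms ab by simp
  finally show "a = b" .
qed

lemma epi_if_right_inverse:
  assumes "s \<cdot> r = ide (cdm s)" "cdm r = dm s"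
  shows "epi C s"
proof (rule epiI)
  fix a b assume ab: "dm a = cdm s" "dm b = cdm s" "a \<cdot> s = b \<cdot> s"
  have "a = a \<cdot> (s \<cdot> r)" using assms ab by simp
  also have "\<dots> = b \<cdot> (s \<cdot> r)" using assms ab comp_assoc[of r s] by metis
  also have "\<dots> = b" using assms ab by simp
  finally show "a = b" .
qed

lemma zero_if_comp_mono:
  assumes m: "mono C m" and z: "is_zero (m \<cdot> x)" and x: "cdm x = dm m"
  shows "is_zero x"
proof -
  obtain y where y: "dm y = dm x" "cdm y = cdm x" "is_zero y" using ex_zero_mor by blast
  have "m \<cdot> x = m \<cdot> y" by (rule zero_mor_unique) (use z y x comp_is_zero in auto)
  then show ?thesis using mono_cancel[OF m] x y by metis
qed

lemma zero_if_comp_epi: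
  assumes e: "epi C e" and z: "is_zero (x \<cdot> e)" and x: "dm x = cdm e"
  shows "is_zero x"
proof -
  obtain y where y: "dm y = dm x" "cdm y = cdm x" "is_zero y" using ex_zero_mor by blast
  have "x \<cdot> e = y \<cdot> e" by (rule zero_mor_unique) (use z y x is_zero_comp in auto)
  then show ?thesis using epi_cancel[OF e] x y by metis
qed

lemma ex_kernel: "\<exists>k. is_kernel C k f"
  and ex_cokernel: "\<exists>c. is_cokernel C c f"
  and mono_is_kernel: "mono C f \<Longrightarrow> \<exists>g. is_kernel C f g"
  and epi_is_cokernel: "epi C f \<Longrightarrow> \<exists>g. is_cokernel C f g"
  using abelian unfolding abelian_cat_def by auto

lemma kernel_cod: "is_kernel C k f \<Longrightarrow> cdm k = dm f"
  and kernel_zero: "is_kernel C k f \<Longrightarrow> is_zero (f \<cdot> k)"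
  and cokernel_dom: "is_cokernel C c f \<Longrightarrow> dm c = cdm f"
  and cokernel_zero: "is_cokernel C c f \<Longrightarrow> is_zero (c \<cdot> f)"
  unfolding is_kernel_def is_cokernel_def by auto

lemma kernel_factorE:
  assumes "is_kernel C k f" "cdm g = dm f" "is_zero (f \<cdot> g)"
  obtains u where "dm u = dm g" "cdm u = dm k" "k \<cdot> u = g"
  using assms unfolding is_kernel_def hom_def by metis

lemma cokernel_factorE:
  assumes "is_cokernel C c f" "dm g = cdm f" "is_zero (g \<cdot> f)"
  obtains u where "dm u = cdm c" "cdm u = cdm g" "u \<cdot> c = g"
  using assms unfolding is_cokernel_def hom_def by metis

lemma kernel_is_mono:
  assumes k: "is_kernel C k f"
  shows "mono C k"
proof (rule monoI)
  fix a b assume ab: "cdm a = dm k" "cdm b = dm k" "dm a = dm b" "k \<cdot> a = k \<cdot> b"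
  have "is_zero (f \<cdot> (k \<cdot> a))"
    using is_zero_comp[OF kernel_zero[OF k], of a] ab kernel_cod[OF k] comp_assoc by simp
  moreover have "cdm (k \<cdot> a) = dm f" using ab kernel_cod[OF k] by simp
  ultimately have "\<exists>!u. hom C (dm (k \<cdot> a)) (dm k) u \<and> k \<cdot> u = k \<cdot> a"
    using k unfolding is_kernel_def by blast
  then show "a = b" using ab kernel_cod[OF k] unfolding hom_def by auto
qed

lemma cokernel_is_epi: "is_cokernel C c f \<Longrightarrow> epi C c"
proof -
  interpret op: abelian_category "op_cat C" by (rule abelian_category_op_cat)
  show "is_cokernel C c f \<Longrightarrow> epi C c" using op.kernel_is_mono by simp
qed

lemma mono_is_kernel_of_cokernel:
  assumes m: "mono C m" and c: "is_cokernel C c m"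
  shows "is_kernel C m c"
proof -
  obtain g where g: "is_kernel C m g" using mono_is_kernel[OF m] by auto
  obtain w where w: "dm w = cdm c" "cdm w = cdm g" "w \<cdot> c = g"
    using cokernel_factorE[OF c _ kernel_zero[OF g]] kernel_cod[OF g] by metis
  show ?thesis unfolding is_kernel_def hom_def
  proof (intro conjI allI impI)
    show "cdm m = dm c" using cokernel_dom[OF c] by simp
    show "is_zero (c \<cdot> m)" using cokernel_zero[OF c] .
    fix h assume h: "cdm h = dm c \<and> is_zero (c \<cdot> h)"
    then have "is_zero (g \<cdot> h)"
      using comp_is_zero[of "c \<cdot> h" w] w comp_assoc[of h c w] cokernel_dom[OF c] by simp
    then obtain u where u: "dm u = dm h" "cdm u = dm m" "m \<cdot> u = h"
      using kernel_factorE[OF g] h cokernel_dom[OF c] kernel_cod[OF g] by metis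
    then show "\<exists>!u. (dm u = dm h \<and> cdm u = dm m) \<and> m \<cdot> u = h"
      using mono_cancel[OF m] by metis
  qed
qed

lemma epi_is_cokernel_of_kernel: "epi C e \<Longrightarrow> is_kernel C k e \<Longrightarrow> is_cokernel C e k"
proof -
  interpret op: abelian_category "op_cat C" by (rule abelian_category_op_cat)
  show "epi C e \<Longrightarrow> is_kernel C k e \<Longrightarrow> is_cokernel C e k"
    using op.mono_is_kernel_of_cokernel by simp
qed

lemma iso_if_mono_epi:
  assumes m: "mono C f" and e: "epi C f"
  obtains g where "dm g = cdm f" "cdm g = dm f" "g \<cdot> f = ide (dm f)" "f \<cdot> g = ide (cdm f)"
proof -
  obtain h where h: "is_kernel C f h" using mono_is_kernel[OF m] by auto
  have "is_zero h"
    by (rule zero_if_comp_epi[OF e kernel_zero[OF h]]) (use kernel_cod[OF h] in simp)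
  then have "is_zero (h \<cdot> ide (cdm f))" using kernel_cod[OF h] by simp
  then obtain g where g: "dm g = cdm f" "cdm g = dm f" "f \<cdot> g = ide (cdm f)"
    using kernel_factorE[OF h] kernel_cod[OF h] by (metis cod_id dom_id)
  have "f \<cdot> (g \<cdot> f) = f \<cdot> ide (dm f)" using g comp_assoc[of f g f] by simp
  then have "g \<cdot> f = ide (dm f)" by (rule mono_cancel[OF m]) (use g in simp_all)
  then show ?thesis using that g by blast
qed

subsection \<open>Morphisms with zero kernel are monic\<close>

lemma productE:
  obtains p1 P p2 where "dm p1 = P" "cdm p1 = a" "dm p2 = P" "cdm p2 = b"
    "\<And>f g. dm f = dm g \<Longrightarrow> cdm f = a \<Longrightarrow> cdm g = b \<Longrightarrow>
       \<exists>u. dm u = dm f \<and> cdm u = P \<and> p1 \<cdot> u = f \<and> p2 \<cdot> u = g"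
    "\<And>u v. dm u = dm v \<Longrightarrow> cdm u = P \<Longrightarrow> cdm v = P \<Longrightarrow>
       p1 \<cdot> u = p1 \<cdot> v \<Longrightarrow> p2 \<cdot> u = p2 \<cdot> v \<Longrightarrow> u = v"
proof -
  have "has_products C" using abelian unfolding abelian_cat_def by auto
  then obtain P p1 p2 where p: "hom C P a p1" "hom C P b p2"
    and univ: "\<forall>x f g. hom C x a f \<and> hom C x b g \<longrightarrow>
      (\<exists>!u. hom C x P u \<and> p1 \<cdot> u = f \<and> p2 \<cdot> u = g)"
    unfolding has_products_def by blast
  show ?thesis
  proof (rule that)
    show "dm p1 = P" "cdm p1 = a" "dm p2 = P" "cdm p2 = b" using p unfolding hom_def by auto
    show "\<exists>u. dm u = dm f \<and> cdm u = P \<and> p1 \<cdot> u = f \<and> p2 \<cdot> u = g"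
      if "dm f = dm g" "cdm f = a" "cdm g = b" for f g
      using univ[rule_format, of "dm f" f g] that unfolding hom_def by auto
    show "u = v" if uv: "dm u = dm v" "cdm u = P" "cdm v = P" "p1 \<cdot> u = p1 \<cdot> v" "p2 \<cdot> u = p2 \<cdot> v"
      for u v
      using univ[rule_format, of "dm u" "p1 \<cdot> u" "p2 \<cdot> u"] uv p unfolding hom_def by auto
  qed
qed


lemma equalizerE:
  assumes "dm u = dm v" "cdm u = cdm v"
  obtains e where "cdm e = dm u" "mono C e" "u \<cdot> e = v \<cdot> e"
    "\<And>a. cdm a = dm u \<Longrightarrow> u \<cdot> a = v \<cdot> a \<Longrightarrow> \<exists>w. dm w = dm a \<and> cdm w = dm e \<and> e \<cdot> w = a"
proof -
  define B where "B = cdm u"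
  obtain p1 P p2 where p: "dm p1 = P" "cdm p1 = B" "dm p2 = P" "cdm p2 = B"
    and pair: "\<And>f g. dm f = dm g \<Longrightarrow> cdm f = B \<Longrightarrow> cdm g = B \<Longrightarrow>
      \<exists>u. dm u = dm f \<and> cdm u = P \<and> p1 \<cdot> u = f \<and> p2 \<cdot> u = g"
    and pair_unique: "\<And>u v. dm u = dm v \<Longrightarrow> cdm u = P \<Longrightarrow> cdm v = P \<Longrightarrow>
      p1 \<cdot> u = p1 \<cdot> v \<Longrightarrow> p2 \<cdot> u = p2 \<cdot> v \<Longrightarrow> u = v"
    by (fact productE[where a=B and b=B])
  have "\<exists>\<Delta>. dm \<Delta> = dm (ide B) \<and> cdm \<Delta> = P \<and> p1 \<cdot> \<Delta> = ide B \<and> p2 \<cdot> \<Delta> = ide B"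
    by (rule pair) simp_all
  then obtain \<Delta> where \<Delta>: "dm \<Delta> = B" "cdm \<Delta> = P" "p1 \<cdot> \<Delta> = ide B" "p2 \<cdot> \<Delta> = ide B"
    by auto
  have "mono C \<Delta>" using mono_if_left_inverse[of p1 \<Delta>] \<Delta> p by simp
  then obtain \<phi> where \<phi>: "is_kernel C \<Delta> \<phi>" using mono_is_kernel by blast
  have "\<exists>uv. dm uv = dm u \<and> cdm uv = P \<and> p1 \<cdot> uv = u \<and> p2 \<cdot> uv = v"
    by (rule pair) (use assms B_def in simp_all)
  then obtain uv where uv: "dm uv = dm u" "cdm uv = P" "p1 \<cdot> uv = u" "p2 \<cdot> uv = v"
    by blast
  obtain e where e: "is_kernel C e (\<phi> \<cdot> uv)" using ex_kernel by auto
  have \<phi>P: "dm \<phi> = P" using kernel_cod[OF \<phi>] \<Delta> by simp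
  have ce: "cdm e = dm u" using kernel_cod[OF e] uv \<phi>P by simp
  txt \<open>A morphism \<open>a\<close> equalizes \<open>u\<close> and \<open>v\<close> iff \<open>uv \<cdot> a\<close> factors through the diagonal,
    i.e. iff \<open>\<phi> \<cdot> uv \<cdot> a\<close> vanishes.\<close>
  have diag: "uv \<cdot> a = \<Delta> \<cdot> w \<longleftrightarrow> u \<cdot> a = w \<and> v \<cdot> a = w"
    if a: "cdm a = dm u" "dm w = dm a" "cdm w = B" for a w
  proof -
    have "p1 \<cdot> (uv \<cdot> a) = u \<cdot> a" "p2 \<cdot> (uv \<cdot> a) = v \<cdot> a"
      using a uv p comp_assoc[of a uv p1] comp_assoc[of a uv p2] by simp_all
    moreover have "p1 \<cdot> (\<Delta> \<cdot> w) = w" "p2 \<cdot> (\<Delta> \<cdot> w) = w"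
      using a \<Delta> p comp_assoc[of w \<Delta> p1] comp_assoc[of w \<Delta> p2] by simp_all
    ultimately show ?thesis
      using pair_unique[of "uv \<cdot> a" "\<Delta> \<cdot> w"] a uv \<Delta> by auto
  qed
  show ?thesis
  proof (rule that[OF ce kernel_is_mono[OF e]])
    have "cdm (uv \<cdot> e) = dm \<phi>" using uv \<phi>P ce by simp
    moreover have "is_zero (\<phi> \<cdot> (uv \<cdot> e))" using kernel_zero[OF e] uv \<phi>P ce comp_assoc[of e uv \<phi>] by simp
    ultimately obtain w where w: "dm w = dm (uv \<cdot> e)" "cdm w = dm \<Delta>" "\<Delta> \<cdot> w = uv \<cdot> e"
      by (rule kernel_factorE[OF \<phi>])
    then show "u \<cdot> e = v \<cdot> e" using diag[of e w] ce \<Delta> uv by auto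
  next
    fix a assume a: "cdm a = dm u" "u \<cdot> a = v \<cdot> a"
    have "uv \<cdot> a = \<Delta> \<cdot> (u \<cdot> a)" using diag[of a "u \<cdot> a"] a assms B_def by simp
    then have zero: "is_zero ((\<phi> \<cdot> uv) \<cdot> a)"
      using comp_assoc[of a uv \<phi>] comp_assoc[of "u \<cdot> a" \<Delta> \<phi>] is_zero_comp[OF kernel_zero[OF \<phi>], of "u \<cdot> a"]
        a assms uv \<Delta> \<phi>P B_def by simp
    have "cdm a = dm (\<phi> \<cdot> uv)" using a uv \<phi>P by simp
    then obtain w where "dm w = dm a" "cdm w = dm e" "e \<cdot> w = a"
      using zero by (rule kernel_factorE[OF e])
    then show "\<exists>w. dm w = dm a \<and> cdm w = dm e \<and> e \<cdot> w = a" by blast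
  qed
qed

lemma coimage_is_epi:
  assumes c: "is_cokernel C c f" and m: "is_kernel C m c"
    and e: "cdm e = dm m" "m \<cdot> e = f"
  shows "epi C e"
proof (rule epiI)
  fix g h assume gh: "dm g = cdm e" "dm h = cdm e" "cdm g = cdm h" "g \<cdot> e = h \<cdot> e"
  have "dm g = dm h" "cdm g = cdm h" using gh by simp_all
  then obtain q where q: "cdm q = dm g" "mono C q" "g \<cdot> q = h \<cdot> q"
    and q_univ: "\<And>a. cdm a = dm g \<Longrightarrow> g \<cdot> a = h \<cdot> a \<Longrightarrow> \<exists>w. dm w = dm a \<and> cdm w = dm q \<and> q \<cdot> w = a"
    by (rule equalizerE) (rule that)
  obtain w where w: "dm w = dm e" "cdm w = dm q" "q \<cdot> w = e"
    using q_univ[of e] gh(1)[symmetric] gh(4) by blast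
  have mq: "mono C (m \<cdot> q)" using mono_comp[OF kernel_is_mono[OF m] q(2)] q gh e by simp
  then obtain \<phi> where \<phi>: "is_kernel C (m \<cdot> q) \<phi>" using mono_is_kernel by blast
  have \<phi>m: "dm \<phi> = cdm m" using kernel_cod[OF \<phi>] q gh e by simp
  txt \<open>The image of \<open>f\<close> already lies in the subobject \<open>m \<cdot> q\<close>, so \<open>m \<cdot> q\<close> is all of the image.\<close>
  have "f = (m \<cdot> q) \<cdot> w" using e w q gh comp_assoc[of w q m] by simp
  then have "is_zero (\<phi> \<cdot> f)"
    using is_zero_comp[OF kernel_zero[OF \<phi>], of w] comp_assoc[of w "m \<cdot> q" \<phi>] w q gh e \<phi>m by simp
  with cokernel_factorE[OF c, of \<phi>] obtain \<psi> where \<psi>: "dm \<psi> = cdm c" "cdm \<psi> = cdm \<phi>" "\<psi> \<cdot> c = \<phi>"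
    using \<phi>m kernel_cod[OF m] cokernel_dom[OF c] by auto
  have "cdm m = dm \<phi>" using \<phi>m by simp
  moreover have "is_zero (\<phi> \<cdot> m)"
    using comp_is_zero[OF kernel_zero[OF m], of \<psi>] comp_assoc[of m c \<psi>] \<psi> kernel_cod[OF m] by simp
  ultimately obtain z where z: "dm z = dm m" "cdm z = dm (m \<cdot> q)" "(m \<cdot> q) \<cdot> z = m"
    by (rule kernel_factorE[OF \<phi>])
  have "m \<cdot> (q \<cdot> z) = m \<cdot> ide (dm m)" using z q gh e comp_assoc[of z q m] by simp
  then have qz: "q \<cdot> z = ide (dm m)"
    by (rule mono_cancel[OF kernel_is_mono[OF m]]) (use z q gh e in simp_all)
  have "g = (g \<cdot> q) \<cdot> z" using qz gh e z q comp_assoc[of z q g] by simp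
  also have "\<dots> = (h \<cdot> q) \<cdot> z" using q by simp
  also have "\<dots> = h" using qz gh e z q comp_assoc[of z q h] by simp
  finally show "g = h" .
qed

lemma mono_if_zero_kernel:
  assumes zero_kernel: "\<And>a. cdm a = dm f \<Longrightarrow> is_zero (f \<cdot> a) \<Longrightarrow> is_zero a"
  shows "mono C f"
proof -
  obtain c where c: "is_cokernel C c f" using ex_cokernel by blast
  obtain m where m: "is_kernel C m c" using ex_kernel by blast
  have "cdm f = dm c" "is_zero (c \<cdot> f)" using cokernel_dom[OF c] cokernel_zero[OF c] by simp_all
  then obtain e where e: "dm e = dm f" "cdm e = dm m" "m \<cdot> e = f" by (rule kernel_factorE[OF m])
  have "epi C e" by (rule coimage_is_epi[OF c m e(2,3)])
  then obtain h where h: "is_cokernel C e h" using epi_is_cokernel by blast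
  have ch: "cdm h = dm f" using cokernel_dom[OF h] e by simp
  have "is_zero (f \<cdot> h)"
    using comp_is_zero[OF cokernel_zero[OF h], of m] comp_assoc[of h e m] e ch by simp
  then have "is_zero h" using zero_kernel ch by blast
  then have "is_zero (ide (cdm h) \<cdot> h)" by simp
  then obtain u where "dm u = cdm e" "cdm u = cdm (ide (cdm h))" "u \<cdot> e = ide (cdm h)"
    by (rule cokernel_factorE[OF h dom_id])
  then have "mono C e" using mono_if_left_inverse[of u e] ch e by simp
  then show ?thesis using mono_comp[OF kernel_is_mono[OF m], of e] e by simp
qed

lemma epi_if_zero_cokernel:
  assumes "\<And>a. dm a = cdm f \<Longrightarrow> is_zero (a \<cdot> f) \<Longrightarrow> is_zero a"
  shows "epi C f"
proof -
  interpret op: abelian_category "op_cat C" by (rule abelian_category_op_cat)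
  have "mono (op_cat C) f" by (rule op.mono_if_zero_kernel) (use assms in simp)
  then show ?thesis by simp
qed

lemma cokernel_of_section_splits:
  assumes tk: "t \<cdot> k = ide (dm k)" "cdm k = dm t" and q: "is_cokernel C q k"
  obtains s where "dm s = cdm q" "cdm s = cdm k" "q \<cdot> s = ide (cdm q)" "is_zero (t \<cdot> s)"
proof -
  have "mono C k" using mono_if_left_inverse[OF tk] .
  then have kq: "is_kernel C k q" using mono_is_kernel_of_cokernel q by blast
  have dq: "dm q = cdm k" using cokernel_dom[OF q] .
  have ct: "cdm t = dm k" using arg_cong[OF tk(1), of cdm] tk(2) by simp
  then have "epi C t" using epi_if_right_inverse[of t k] tk by simp
  obtain n where n: "is_kernel C n t" using ex_kernel by blast
  have cn: "cdm n = cdm k" using kernel_cod[OF n] tk by simp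
  have t_coker: "is_cokernel C t n" using epi_is_cokernel_of_kernel[OF \<open>epi C t\<close> n] .
  txt \<open>The complement \<open>n\<close> of \<open>k\<close> maps isomorphically onto the cokernel of \<open>k\<close>.\<close>
  have "mono C (q \<cdot> n)"
  proof (rule mono_if_zero_kernel)
    fix a assume a: "cdm a = dm (q \<cdot> n)" "is_zero ((q \<cdot> n) \<cdot> a)"
    then have "cdm (n \<cdot> a) = dm q" "is_zero (q \<cdot> (n \<cdot> a))"
      using cn dq comp_assoc[of a n q] by simp_all
    then obtain b where b: "dm b = dm (n \<cdot> a)" "cdm b = dm k" "k \<cdot> b = n \<cdot> a"
      by (rule kernel_factorE[OF kq])
    have "b = t \<cdot> (n \<cdot> a)" using b tk comp_assoc[of b k t] by simp
    also have "\<dots> = (t \<cdot> n) \<cdot> a" using a cn dq tk comp_assoc[of a n t] by simp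
    finally have "is_zero b" using is_zero_comp[OF kernel_zero[OF n], of a] a cn dq kernel_cod[OF n] by simp
    then have "is_zero (n \<cdot> a)" using comp_is_zero[of b k] b by simp
    then show "is_zero a"
      using zero_if_comp_mono[OF kernel_is_mono[OF n]] a cn dq by simp
  qed
  moreover have "epi C (q \<cdot> n)"
  proof (rule epi_if_zero_cokernel)
    fix z assume z: "dm z = cdm (q \<cdot> n)" "is_zero (z \<cdot> (q \<cdot> n))"
    then have "dm (z \<cdot> q) = cdm n" "is_zero ((z \<cdot> q) \<cdot> n)"
      using cn dq comp_assoc[of n q z] by simp_all
    then obtain w where w: "dm w = cdm t" "cdm w = cdm (z \<cdot> q)" "w \<cdot> t = z \<cdot> q"
      by (rule cokernel_factorE[OF t_coker])
    have "w = (z \<cdot> q) \<cdot> k" using w tk ct comp_assoc[of k t w] by simp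
    then have "is_zero w"
      using comp_is_zero[OF cokernel_zero[OF q], of z] comp_assoc[of k q z] z cn dq by simp
    then have "is_zero (z \<cdot> q)" using is_zero_comp[of w t] w by simp
    then show "is_zero z" using zero_if_comp_epi[OF cokernel_is_epi[OF q]] z cn dq by simp
  qed
  ultimately obtain \<phi> where "dm \<phi> = cdm (q \<cdot> n)" "cdm \<phi> = dm (q \<cdot> n)"
    "\<phi> \<cdot> (q \<cdot> n) = ide (dm (q \<cdot> n))" "(q \<cdot> n) \<cdot> \<phi> = ide (cdm (q \<cdot> n))"
    by (rule iso_if_mono_epi)
  then have \<phi>: "dm \<phi> = cdm q" "cdm \<phi> = dm n" "(q \<cdot> n) \<cdot> \<phi> = ide (cdm q)" using cn dq by simp_all
  show ?thesis
  proof (rule that[of "n \<cdot> \<phi>"])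
    show "dm (n \<cdot> \<phi>) = cdm q" "cdm (n \<cdot> \<phi>) = cdm k" using \<phi> cn by simp_all
    show "q \<cdot> (n \<cdot> \<phi>) = ide (cdm q)" using \<phi> cn dq comp_assoc[of \<phi> n q] by simp
    show "is_zero (t \<cdot> (n \<cdot> \<phi>))"
      using is_zero_comp[OF kernel_zero[OF n], of \<phi>] comp_assoc[of \<phi> n t] \<phi> kernel_cod[OF n] by simp
  qed
qed

lemma kernel_of_retraction_splits:
  assumes "k \<cdot> t = ide (cdm k)" "cdm t = dm k" and "is_kernel C q k"
  obtains s where "dm s = dm k" "cdm s = dm q" "s \<cdot> q = ide (dm q)" "is_zero (s \<cdot> t)"
proof -
  interpret op: abelian_category "op_cat C" by (rule abelian_category_op_cat)
  show ?thesis by (rule op.cokernel_of_section_splits[of t k q]) (use assms that in simp_all)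
qed

subsection \<open>Intersections and sums of subobjects\<close>

lemma factors_throughE:
  assumes "factors_through C a k"
  obtains u where "dm u = dm a" "cdm u = dm k" "k \<cdot> u = a"
  using assms unfolding factors_through_def hom_def by blast

lemma factors_through_cod: "factors_through C a k \<Longrightarrow> cdm a = cdm k"
  unfolding factors_through_def by simp

lemma factors_throughI: "cdm u = dm k \<Longrightarrow> factors_through C (k \<cdot> u) k"
  unfolding factors_through_def hom_def by auto

lemma factors_through_trans:
  assumes "factors_through C a b" "factors_through C b c"
  shows "factors_through C a c"
proof -
  obtain u where u: "dm u = dm a" "cdm u = dm b" "b \<cdot> u = a" using assms(1) by (rule factors_throughE)
  obtain v where v: "dm v = dm b" "cdm v = dm c" "c \<cdot> v = b" using assms(2) by (rule factors_throughE)
  have "c \<cdot> (v \<cdot> u) = a" using u v comp_assoc[of u v c] by simp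
  then show ?thesis using factors_throughI[of "v \<cdot> u" c] u v by simp
qed

lemma factors_through_refl: "factors_through C a a"
  using factors_throughI[of "ide (dm a)" a] by simp

lemma factors_through_kernel_iff:
  assumes k: "is_kernel C k f" and y: "cdm y = dm f"
  shows "factors_through C y k \<longleftrightarrow> is_zero (f \<cdot> y)"
proof
  assume "factors_through C y k"
  then obtain u where u: "dm u = dm y" "cdm u = dm k" "k \<cdot> u = y" by (rule factors_throughE)
  then show "is_zero (f \<cdot> y)"
    using is_zero_comp[OF kernel_zero[OF k], of u] comp_assoc[of u k f] kernel_cod[OF k] by simp
next
  assume "is_zero (f \<cdot> y)"
  with y obtain u where "dm u = dm y" "cdm u = dm k" "k \<cdot> u = y" by (rule kernel_factorE[OF k])
  then show "factors_through C y k" using factors_throughI[of u k] by simp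
qed

lemma factors_through_mono_iff:
  assumes "mono C m" "is_cokernel C c m" "cdm y = cdm m"
  shows "factors_through C y m \<longleftrightarrow> is_zero (c \<cdot> y)"
  using factors_through_kernel_iff[OF mono_is_kernel_of_cokernel[OF assms(1,2)]] assms(3)
    cokernel_dom[OF assms(2)] by simp

lemma is_sectionE:
  assumes "is_section C s"
  obtains r where "dm r = cdm s" "cdm r = dm s" "r \<cdot> s = ide (dm s)"
  using assms unfolding is_section_def hom_def by blast

lemma is_sectionI: "cdm s = dm r \<Longrightarrow> r \<cdot> s = ide (dm s) \<Longrightarrow> is_section C s"
  unfolding is_section_def hom_def by (metis cod_comp cod_id)

lemma is_retractionE:
  assumes "is_retraction C s"
  obtains r where "dm r = cdm s" "cdm r = dm s" "s \<cdot> r = ide (cdm s)"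
  using assms unfolding is_retraction_def hom_def by blast

lemma section_is_mono: "is_section C s \<Longrightarrow> mono C s"
  by (elim is_sectionE) (simp add: mono_if_left_inverse)

lemma image_factors_through:
  assumes c: "is_cokernel C c t" and m: "is_kernel C m c"
    and k: "mono C k" and tk: "factors_through C t k"
  shows "factors_through C m k"
proof -
  obtain g where g: "is_cokernel C g k" using ex_cokernel by blast
  have "dm g = cdm t" using cokernel_dom[OF g] factors_through_cod[OF tk] by simp
  moreover have "is_zero (g \<cdot> t)"
    using factors_through_mono_iff[OF k g] tk factors_through_cod[OF tk] by simp
  ultimately obtain w where w: "dm w = cdm c" "cdm w = cdm g" "w \<cdot> c = g"
    by (rule cokernel_factorE[OF c])
  have "is_zero (g \<cdot> m)"
    using comp_is_zero[OF kernel_zero[OF m], of w] comp_assoc[of m c w] w kernel_cod[OF m] by simp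
  moreover have "cdm m = cdm k"
    using kernel_cod[OF m] cokernel_dom[OF c] factors_through_cod[OF tk] by simp
  ultimately show ?thesis using factors_through_mono_iff[OF k g] by simp
qed

lemma intersection_factor:
  assumes j: "is_intersection C M I ks j" and mono: "\<forall>x\<in>I. mono C (ks x)"
    and t: "cdm t = M" "\<forall>x\<in>I. factors_through C t (ks x)"
  shows "factors_through C t j"
proof -
  obtain c where c: "is_cokernel C c t" using ex_cokernel by blast
  obtain m where m: "is_kernel C m c" using ex_kernel by blast
  have "\<forall>x\<in>I. factors_through C m (ks x)"
    using image_factors_through[OF c m] mono t by blast
  moreover have "mono C m" "cdm m = M" using kernel_is_mono[OF m] kernel_cod[OF m] cokernel_dom[OF c] t
    by simp_all
  ultimately have "factors_through C m j" using j unfolding is_intersection_def by blast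
  moreover have "factors_through C t m"
    using factors_through_kernel_iff[OF m] cokernel_zero[OF c] cokernel_dom[OF c] by simp
  ultimately show ?thesis using factors_through_trans by blast
qed

lemma sum_annihilator:
  assumes s: "is_sum C M I ks s" and z: "dm \<zeta> = M" "\<forall>x\<in>I. is_zero (\<zeta> \<cdot> ks x)"
  shows "is_zero (\<zeta> \<cdot> s)"
proof -
  obtain m where m: "is_kernel C m \<zeta>" using ex_kernel by blast
  have "\<forall>x\<in>I. factors_through C (ks x) m"
    using s z factors_through_kernel_iff[OF m] factors_through_cod unfolding is_sum_def by metis
  moreover have "mono C m" "cdm m = M" using kernel_is_mono[OF m] kernel_cod[OF m] z by simp_all
  ultimately have "factors_through C s m" using s unfolding is_sum_def by blast
  then show ?thesis using factors_through_kernel_iff[OF m] s z unfolding is_sum_def by simp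
qed

lemma section_if_factors_mutually:
  assumes s: "mono C s" and sk: "factors_through C s k" and ks: "factors_through C k s"
    and k: "is_section C k"
  shows "is_section C s"
proof -
  obtain a where a: "dm a = dm s" "cdm a = dm k" "k \<cdot> a = s" using sk by (rule factors_throughE)
  obtain b where b: "dm b = dm k" "cdm b = dm s" "s \<cdot> b = k" using ks by (rule factors_throughE)
  obtain r where r: "dm r = cdm k" "cdm r = dm k" "r \<cdot> k = ide (dm k)" using k by (rule is_sectionE)
  have "s \<cdot> (b \<cdot> a) = s \<cdot> ide (dm s)" using a b comp_assoc[of a b s] by simp
  then have ba: "b \<cdot> a = ide (dm s)" by (rule mono_cancel[OF s]) (use a b in simp_all)
  have "r \<cdot> s = (r \<cdot> k) \<cdot> a" using a r comp_assoc[of a k r] by simp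
  then have "r \<cdot> s = a" using r a by simp
  then have "(b \<cdot> r) \<cdot> s = ide (dm s)"
    using ba comp_assoc[of s r b] a b r factors_through_cod[OF sk] by simp
  then show ?thesis using is_sectionI[of s "b \<cdot> r"] a b r factors_through_cod[OF sk] by simp
qed

lemma zero_subobject:
  assumes z: "zero_obj C z" and n: "dm n = z" "cdm n = M"
  shows "mono C n" "is_section C n" "\<And>t. cdm t = M \<Longrightarrow> factors_through C n t"
proof -
  show "mono C n" by (rule monoI) (rule zero_obj_unique_into[OF z]; use n in simp)
  obtain r where r: "dm r = M" "cdm r = z" using zero_obj_ex_into[OF z] by blast
  have "r \<cdot> n = ide z" by (rule zero_obj_unique_into[OF z]) (use n r in simp_all)
  then show "is_section C n" using is_sectionI[of n r] n r by simp
  fix t assume t: "cdm t = M"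
  obtain u where u: "dm u = z" "cdm u = dm t" using zero_obj_ex_from[OF z] by blast
  have "t \<cdot> u = n" by (rule zero_obj_unique_from[OF z]) (use u n t in simp_all)
  then show "factors_through C n t" using factors_throughI[of u t] u by simp
qed

lemma is_intersection_empty: "is_intersection C M {} ks (ide M)"
  unfolding is_intersection_def
  using mono_if_left_inverse[of "ide M" "ide M"] factors_throughI[of _ "ide M"]
  by (auto simp: factors_through_def hom_def)

lemma is_intersection_insert:
  assumes j: "is_intersection C M F ks j" and a: "mono C (ks a)" "cdm (ks a) = M"
    and q: "is_cokernel C q (ks a)" and \<kappa>: "is_kernel C \<kappa> (q \<cdot> j)"
  shows "is_intersection C M (insert a F) ks (j \<cdot> \<kappa>)"
proof -
  have jM: "mono C j" "cdm j = M" "\<forall>x\<in>F. factors_through C j (ks x)"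
    using j unfolding is_intersection_def by auto
  have dq: "dm q = M" using cokernel_dom[OF q] a by simp
  have c\<kappa>: "cdm \<kappa> = dm j" using kernel_cod[OF \<kappa>] jM dq by simp
  have below_a: "factors_through C y (ks a) \<longleftrightarrow> is_zero (q \<cdot> y)" if "cdm y = M" for y
    using factors_through_mono_iff[OF a(1) q] that a by simp
  have "is_zero (q \<cdot> (j \<cdot> \<kappa>))" using kernel_zero[OF \<kappa>] comp_assoc[of \<kappa> j q] c\<kappa> jM dq by simp
  then have "factors_through C (j \<cdot> \<kappa>) (ks a)" using below_a c\<kappa> jM by simp
  moreover have "factors_through C (j \<cdot> \<kappa>) (ks x)" if "x \<in> F" for x
    using factors_through_trans[OF factors_throughI[OF c\<kappa>]] jM that by blast
  moreover have "factors_through C t (j \<cdot> \<kappa>)"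
    if t: "mono C t" "cdm t = M" "\<forall>x\<in>insert a F. factors_through C t (ks x)" for t
  proof -
    have "factors_through C t j" using j t unfolding is_intersection_def by auto
    then obtain v where v: "dm v = dm t" "cdm v = dm j" "j \<cdot> v = t" by (rule factors_throughE)
    have "is_zero ((q \<cdot> j) \<cdot> v)" using below_a[of t] t v comp_assoc[of v j q] jM dq by simp
    then have "factors_through C v \<kappa>"
      using factors_through_kernel_iff[OF \<kappa>] v jM dq by simp
    then obtain y where "dm y = dm v" "cdm y = dm \<kappa>" "\<kappa> \<cdot> y = v" by (rule factors_throughE)
    then show ?thesis using factors_throughI[of y "j \<cdot> \<kappa>"] comp_assoc[of y \<kappa> j] v c\<kappa> by simp
  qed
  ultimately show ?thesis
    unfolding is_intersection_def using mono_comp[OF jM(1) kernel_is_mono[OF \<kappa>] c\<kappa>] c\<kappa> jM by auto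
qed

lemma finite_intersection_exists:
  assumes "finite I" "\<forall>x\<in>I. mono C (ks x) \<and> cdm (ks x) = M"
  shows "\<exists>j. is_intersection C M I ks j"
  using assms
proof (induction I rule: finite_induct)
  case empty
  show ?case using is_intersection_empty by blast
next
  case (insert a F)
  then obtain j where j: "is_intersection C M F ks j" by blast
  obtain q where q: "is_cokernel C q (ks a)" using ex_cokernel by blast
  obtain \<kappa> where \<kappa>: "is_kernel C \<kappa> (q \<cdot> j)" using ex_kernel by blast
  show ?case using is_intersection_insert[OF j _ _ q \<kappa>] insert.prems by blast
qed

lemma join_as_kernel:
  assumes q: "is_cokernel C q k" and c: "is_cokernel C c (q \<cdot> w)"
    and \<kappa>: "is_kernel C \<kappa> (c \<cdot> q)" and w: "cdm w = cdm k"
  shows "factors_through C w \<kappa>" "factors_through C k \<kappa>"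
    and "\<And>m. mono C m \<Longrightarrow> factors_through C w m \<Longrightarrow> factors_through C k m \<Longrightarrow> factors_through C \<kappa> m"
proof -
  have dq: "dm q = cdm k" using cokernel_dom[OF q] .
  have dc: "dm c = cdm q" using cokernel_dom[OF c] w dq by simp
  have below: "factors_through C y \<kappa> \<longleftrightarrow> is_zero (c \<cdot> (q \<cdot> y))" if "cdm y = cdm k" for y
    using factors_through_kernel_iff[OF \<kappa>] comp_assoc[of y q c] that dq dc by simp
  show "factors_through C w \<kappa>" using below[OF w] cokernel_zero[OF c] by simp
  show "factors_through C k \<kappa>" using below comp_is_zero[OF cokernel_zero[OF q], of c] dc dq by simp
  fix m assume m: "mono C m" and wm: "factors_through C w m" and km: "factors_through C k m"
  obtain \<zeta> where \<zeta>: "is_cokernel C \<zeta> m" using ex_cokernel by blast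
  have cm: "cdm m = cdm k" using factors_through_cod[OF km] by simp
  have d\<zeta>: "dm \<zeta> = cdm k" using cokernel_dom[OF \<zeta>] cm by simp
  have "is_zero (\<zeta> \<cdot> k)" using factors_through_mono_iff[OF m \<zeta>] km cm by simp
  with d\<zeta> obtain \<zeta>' where \<zeta>': "dm \<zeta>' = cdm q" "cdm \<zeta>' = cdm \<zeta>" "\<zeta>' \<cdot> q = \<zeta>"
    by (rule cokernel_factorE[OF q])
  have "is_zero (\<zeta> \<cdot> w)" using factors_through_mono_iff[OF m \<zeta>] wm w cm by simp
  then have "is_zero (\<zeta>' \<cdot> (q \<cdot> w))" using \<zeta>' comp_assoc[of w q \<zeta>'] w dq by simp
  moreover have "dm \<zeta>' = cdm (q \<cdot> w)" using \<zeta>' w dq by simp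
  ultimately obtain \<zeta>'' where \<zeta>'': "dm \<zeta>'' = cdm c" "cdm \<zeta>'' = cdm \<zeta>'" "\<zeta>'' \<cdot> c = \<zeta>'"
    using cokernel_factorE[OF c] by blast
  have c\<kappa>: "cdm \<kappa> = cdm k" using kernel_cod[OF \<kappa>] dc dq by simp
  have "\<zeta> \<cdot> \<kappa> = \<zeta>'' \<cdot> ((c \<cdot> q) \<cdot> \<kappa>)"
    using \<zeta>' \<zeta>'' comp_assoc[of \<kappa> q \<zeta>'] comp_assoc[of "q \<cdot> \<kappa>" c \<zeta>''] comp_assoc[of \<kappa> q c] c\<kappa> dq dc
    by simp
  then have "is_zero (\<zeta> \<cdot> \<kappa>)"
    using comp_is_zero[OF kernel_zero[OF \<kappa>], of \<zeta>''] \<zeta>'' dc dq c\<kappa> by simp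
  then show "factors_through C \<kappa> m" using factors_through_mono_iff[OF m \<zeta>] c\<kappa> cm by simp
qed

lemma is_sum_insert:
  assumes s: "is_sum C M F ks s" and a: "cdm (ks a) = M"
    and q: "is_cokernel C q s" and c: "is_cokernel C c (q \<cdot> ks a)" and \<kappa>: "is_kernel C \<kappa> (c \<cdot> q)"
  shows "is_sum C M (insert a F) ks \<kappa>"
proof -
  have sM: "cdm s = M" "\<forall>x\<in>F. factors_through C (ks x) s" using s unfolding is_sum_def by auto
  note join = join_as_kernel[OF q c \<kappa>, unfolded sM a, simplified]
  have "cdm \<kappa> = M" using factors_through_cod[OF join(2)] sM by simp
  moreover have "factors_through C (ks x) \<kappa>" if "x \<in> insert a F" for x
    using that join(1,2) sM factors_through_trans by blast
  moreover have "factors_through C \<kappa> m"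
    if "mono C m" "cdm m = M" "\<forall>x\<in>insert a F. factors_through C (ks x) m" for m
    using that s join(3) unfolding is_sum_def by blast
  ultimately show ?thesis unfolding is_sum_def using kernel_is_mono[OF \<kappa>] by blast
qed

lemma finite_sum_exists:
  assumes "finite I" "\<forall>x\<in>I. cdm (ks x) = M"
  shows "\<exists>s. is_sum C M I ks s"
  using assms
proof (induction I rule: finite_induct)
  case empty
  obtain z where z: "zero_obj C z" using ex_zero_obj by blast
  obtain n where n: "dm n = z" "cdm n = M" using zero_obj_ex_from[OF z] by blast
  have "is_sum C M {} ks n" using zero_subobject[OF z n] n unfolding is_sum_def by blast
  then show ?case by blast
next
  case (insert a F)
  then obtain s where s: "is_sum C M F ks s" by blast
  obtain q where q: "is_cokernel C q s" using ex_cokernel by blast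
  obtain c where c: "is_cokernel C c (q \<cdot> ks a)" using ex_cokernel by blast
  obtain \<kappa> where \<kappa>: "is_kernel C \<kappa> (c \<cdot> q)" using ex_kernel by blast
  show ?case using is_sum_insert[OF s _ q c \<kappa>] insert.prems by blast
qed

lemma fully_invariant_factor:
  assumes "fully_invariant C k" "factors_through C a k" "dm h = cdm k" "cdm h = cdm k"
  shows "factors_through C (h \<cdot> a) k"
proof -
  obtain \<alpha> where \<alpha>: "dm \<alpha> = dm k" "cdm \<alpha> = dm k" "h \<cdot> k = k \<cdot> \<alpha>"
    using assms(1,3,4) unfolding fully_invariant_def hom_def by blast
  obtain u where u: "dm u = dm a" "cdm u = dm k" "k \<cdot> u = a" using assms(2) by (rule factors_throughE)
  have "h \<cdot> a = k \<cdot> (\<alpha> \<cdot> u)" using \<alpha> u assms(3) comp_assoc[of u k h] comp_assoc[of u \<alpha> k] by simp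
  then show ?thesis using factors_throughI[of "\<alpha> \<cdot> u" k] \<alpha> u by simp
qed

lemma fully_invariantI:
  assumes "mono C k" "\<And>h. dm h = cdm k \<Longrightarrow> cdm h = cdm k \<Longrightarrow> factors_through C (h \<cdot> k) k"
  shows "fully_invariant C k"
  unfolding fully_invariant_def hom_def
proof (intro conjI allI impI assms(1))
  fix h assume h: "dm h = cdm k \<and> cdm h = cdm k"
  then obtain \<alpha> where "dm \<alpha> = dm (h \<cdot> k)" "cdm \<alpha> = dm k" "k \<cdot> \<alpha> = h \<cdot> k"
    using assms(2) by (metis factors_throughE)
  then show "\<exists>\<alpha>. (dm \<alpha> = dm k \<and> cdm \<alpha> = dm k) \<and> h \<cdot> k = k \<cdot> \<alpha>" using h by auto
qed

lemma fully_invariant_intersection: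
  assumes j: "is_intersection C M I ks j" and fi: "\<forall>x\<in>I. fully_invariant C (ks x)"
  shows "fully_invariant C j"
proof (rule fully_invariantI)
  show "mono C j" using j unfolding is_intersection_def by blast
  fix h assume h: "dm h = cdm j" "cdm h = cdm j"
  have "\<forall>x\<in>I. factors_through C (h \<cdot> j) (ks x)"
    using fully_invariant_factor fi j h factors_through_cod unfolding is_intersection_def by metis
  then show "factors_through C (h \<cdot> j) j"
    using intersection_factor[OF j] fi h j unfolding fully_invariant_def is_intersection_def by simp
qed

lemma fully_invariant_sum:
  assumes s: "is_sum C M I ks s" and fi: "\<forall>x\<in>I. fully_invariant C (ks x)"
  shows "fully_invariant C s"
proof (rule fully_invariantI)
  have s': "mono C s" "cdm s = M" "\<forall>x\<in>I. factors_through C (ks x) s" using s unfolding is_sum_def by auto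
  then show "mono C s" by blast
  fix h assume h: "dm h = cdm s" "cdm h = cdm s"
  obtain \<zeta> where \<zeta>: "is_cokernel C \<zeta> s" using ex_cokernel by blast
  have d\<zeta>: "dm \<zeta> = M" using cokernel_dom[OF \<zeta>] s' by simp
  have below: "factors_through C y s \<longleftrightarrow> is_zero (\<zeta> \<cdot> y)" if "cdm y = M" for y
    using factors_through_mono_iff[OF s'(1) \<zeta>] that s' by simp
  have "is_zero ((\<zeta> \<cdot> h) \<cdot> ks x)" if "x \<in> I" for x
  proof -
    have "factors_through C (h \<cdot> ks x) (ks x)"
      using fully_invariant_factor[OF _ factors_through_refl] fi that h s' factors_through_cod by metis
    then have "factors_through C (h \<cdot> ks x) s" using factors_through_trans s' that by blast
    then show ?thesis
      using below[of "h \<cdot> ks x"] comp_assoc[of "ks x" h \<zeta>] h d\<zeta> s' that factors_through_cod by metis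
  qed
  then have "is_zero ((\<zeta> \<cdot> h) \<cdot> s)" using sum_annihilator[OF s] h d\<zeta> s' by simp
  then show "factors_through C (h \<cdot> s) s" using below comp_assoc[of s h \<zeta>] h d\<zeta> s' by simp
qed

section \<open>Self-\<open>F\<close>-split objects\<close>

lemma section_if_retract_of_section:
  assumes x: "is_section C x" and j: "mono C j"
    and u: "cdm u = dm x" "x \<cdot> u = j"
    and \<rho>: "dm \<rho> = dm x" "cdm \<rho> = dm j" "j \<cdot> \<rho> = e \<cdot> x"
    and e: "cdm x = dm e" "e \<cdot> j = j"
  shows "is_section C j"
proof -
  obtain r where r: "dm r = cdm x" "cdm r = dm x" "r \<cdot> x = ide (dm x)" using x by (rule is_sectionE)
  have du: "dm u = dm j" and cj: "cdm j = cdm x" using u by auto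
  have "j \<cdot> (\<rho> \<cdot> u) = (e \<cdot> x) \<cdot> u" using \<rho> u comp_assoc[of u \<rho> j] by simp
  also have "\<dots> = j \<cdot> ide (dm j)" using u e comp_assoc[of u x e] by simp
  finally have \<rho>u: "\<rho> \<cdot> u = ide (dm j)" by (rule mono_cancel[OF j]) (use \<rho> u du in simp_all)
  have "r \<cdot> j = u" using r u comp_assoc[of u x r] by simp
  then have "(\<rho> \<cdot> r) \<cdot> j = ide (dm j)" using \<rho>u \<rho> r cj comp_assoc[of j r \<rho>] by simp
  then show ?thesis using is_sectionI[of j "\<rho> \<cdot> r"] \<rho> r u by auto
qed

lemma self_F_split_meet_is_section:
  assumes split: "self_F_split b C i d" and i: "is_kernel C i d"
    and k: "is_section C k" "cdm k = cdm i"
    and p: "dm p = cdm i" "cdm p = cdm i"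
    and l: "\<And>y. cdm y = cdm i \<Longrightarrow> is_zero (d \<cdot> (p \<cdot> y)) \<Longrightarrow> factors_through C y l"
    and j: "mono C j" "factors_through C j k" "is_zero (d \<cdot> (p \<cdot> j))"
    and j_univ: "\<And>y. cdm y = cdm i \<Longrightarrow> factors_through C y k \<Longrightarrow> factors_through C y l \<Longrightarrow>
      factors_through C y j"
  shows "is_section C j"
proof -
  have di: "dm d = cdm i" using kernel_cod[OF i] by simp
  obtain t where t: "dm t = cdm k" "cdm t = dm k" "t \<cdot> k = ide (dm k)" using k(1) by (rule is_sectionE)
  define e where "e = k \<cdot> t"
  have e: "dm e = cdm i" "cdm e = cdm i" using e_def t k by simp_all
  have cj: "cdm j = cdm i" using factors_through_cod[OF j(2)] k by simp
  have "e \<cdot> j = j"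
  proof -
    obtain a where a: "dm a = dm j" "cdm a = dm k" "k \<cdot> a = j" using j(2) by (rule factors_throughE)
    then have "t \<cdot> j = a" using t comp_assoc[of a k t] by simp
    then show ?thesis using e_def a t k comp_assoc[of j t k] cj by simp
  qed
  obtain x where x: "is_kernel C x (d \<cdot> (p \<cdot> e))" using ex_kernel by blast
  have cx: "cdm x = cdm i" using kernel_cod[OF x] p e di by simp
  have "is_section C x"
    using split[unfolded self_F_split_def hom_def, rule_format, of "p \<cdot> e" x] x p e by simp
  moreover have "factors_through C j x"
    using factors_through_kernel_iff[OF x] j(3) \<open>e \<cdot> j = j\<close> comp_assoc[of j e p]
      comp_assoc[of j "p \<cdot> e" d] p e cj di by simp
  then obtain u where u: "dm u = dm j" "cdm u = dm x" "x \<cdot> u = j" by (rule factors_throughE)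
  moreover have "factors_through C (e \<cdot> x) j"
  proof (rule j_univ)
    show "cdm (e \<cdot> x) = cdm i" using e cx by simp
    have "e \<cdot> x = k \<cdot> (t \<cdot> x)" using e_def comp_assoc[of x t k] t k cx by simp
    then show "factors_through C (e \<cdot> x) k" using factors_throughI[of "t \<cdot> x" k] t k cx by simp
    have "is_zero ((d \<cdot> (p \<cdot> e)) \<cdot> x)" using kernel_zero[OF x] .
    then have "is_zero (d \<cdot> (p \<cdot> (e \<cdot> x)))"
      using comp_assoc[of x "p \<cdot> e" d] comp_assoc[of x e p] p e cx di by simp
    then show "factors_through C (e \<cdot> x) l" using l e cx by simp
  qed
  then obtain \<rho> where "dm \<rho> = dm (e \<cdot> x)" "cdm \<rho> = dm j" "j \<cdot> \<rho> = e \<cdot> x"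
    by (rule factors_throughE)
  ultimately show ?thesis
    using section_if_retract_of_section[of x j u \<rho> e] j(1) \<open>e \<cdot> j = j\<close> e cx by simp
qed

lemma complement_projectionE:
  assumes "is_section C l"
  obtains p where "dm p = cdm l" "cdm p = cdm l"
    "\<And>y. cdm y = cdm l \<Longrightarrow> factors_through C (p \<cdot> y) l \<Longrightarrow> factors_through C y l"
    "\<And>y. cdm y = cdm l \<Longrightarrow> factors_through C y l \<Longrightarrow> is_zero (p \<cdot> y)"
proof -
  obtain t where t: "dm t = cdm l" "cdm t = dm l" "t \<cdot> l = ide (dm l)" using assms by (rule is_sectionE)
  obtain q where q: "is_cokernel C q l" using ex_cokernel by blast
  have dq: "dm q = cdm l" using cokernel_dom[OF q] .
  obtain s where s: "dm s = cdm q" "cdm s = cdm l" "q \<cdot> s = ide (cdm q)" "is_zero (t \<cdot> s)"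
    using cokernel_of_section_splits[OF t(3) _ q] t by auto
  have ml: "mono C l" using section_is_mono[OF assms] .
  have below: "factors_through C y l \<longleftrightarrow> is_zero (q \<cdot> y)" if "cdm y = cdm l" for y
    using factors_through_mono_iff[OF ml q that] .
  show ?thesis
  proof (rule that[of "s \<cdot> q"])
    show "dm (s \<cdot> q) = cdm l" "cdm (s \<cdot> q) = cdm l" using s dq by simp_all
    fix y
    assume y: "cdm y = cdm l"
    show "is_zero ((s \<cdot> q) \<cdot> y)" if "factors_through C y l"
      using below[OF y] that comp_is_zero[of "q \<cdot> y" s] comp_assoc[of y q s] s dq y by simp
    assume "factors_through C ((s \<cdot> q) \<cdot> y) l"
    txt \<open>Since \<open>t \<cdot> s = 0\<close>, the image of \<open>s \<cdot> q\<close> meets \<open>l\<close> trivially.\<close>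
    then obtain v where v: "dm v = dm ((s \<cdot> q) \<cdot> y)" "cdm v = dm l" "l \<cdot> v = (s \<cdot> q) \<cdot> y"
      by (rule factors_throughE)
    have "v = (t \<cdot> s) \<cdot> (q \<cdot> y)"
      using v t s y dq comp_assoc[of v l t] comp_assoc[of y q s] comp_assoc[of "q \<cdot> y" s t] by simp
    then have "is_zero v" using is_zero_comp[OF s(4), of "q \<cdot> y"] s t y dq by simp
    then have "is_zero (q \<cdot> ((s \<cdot> q) \<cdot> y))"
      using v comp_is_zero[of "l \<cdot> v" q] comp_is_zero[of v l] s y dq by simp
    moreover have "q \<cdot> ((s \<cdot> q) \<cdot> y) = q \<cdot> y"
      using s y dq comp_assoc[of y q s] comp_assoc[of "q \<cdot> y" s q] by simp
    ultimately show "factors_through C y l" using below y by simp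
  qed
qed

lemma intersection_pair:
  assumes "is_intersection C M {0::nat, 1} (\<lambda>x. if x = 0 then a else c) j"
  shows "mono C j" "cdm j = M" "factors_through C j a" "factors_through C j c"
  using assms unfolding is_intersection_def by (auto dest: bspec[of _ _ 0] bspec[of _ _ 1])

lemma self_F_split_intersection_with_summand:
  assumes split: "self_F_split b C i d" and i: "is_kernel C i d" "fully_invariant C i"
    and k: "direct_summand b C (cdm i) k"
    and j: "is_intersection C (cdm i) {0::nat, 1} (\<lambda>x. if x = 0 then i else k) j"
  shows "direct_summand b C (cdm i) j"
proof -
  have k': "is_section C k" "cdm k = cdm i" "b \<longrightarrow> fully_invariant C k"
    using k unfolding direct_summand_def by auto
  note j' = intersection_pair[OF j]
  have di: "dm d = cdm i" using kernel_cod[OF i(1)] by simp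
  have below_i: "factors_through C y i \<longleftrightarrow> is_zero (d \<cdot> (ide (cdm i) \<cdot> y))" if "cdm y = cdm i" for y
    using factors_through_kernel_iff[OF i(1)] that di by simp
  have parts_mono: "\<forall>x\<in>{0::nat, 1}. mono C (if x = 0 then i else k)"
    using i(2) section_is_mono[OF k'(1)] unfolding fully_invariant_def by auto
  have "is_section C j"
  proof (rule self_F_split_meet_is_section[OF split i(1) k'(1,2)])
    show "is_zero (d \<cdot> (ide (cdm i) \<cdot> j))" using below_i j' by simp
    fix y assume "cdm y = cdm i" "factors_through C y k" "factors_through C y i"
    then show "factors_through C y j" using intersection_factor[OF j parts_mono] by auto
  qed (use below_i j' in simp_all)
  moreover have "b \<longrightarrow> fully_invariant C j"
    using fully_invariant_intersection[OF j] i(2) k'(3) by auto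
  ultimately show ?thesis using j' unfolding direct_summand_def by simp
qed

lemma self_F_split_finite_intersection_section:
  assumes split: "self_F_split b C i d" and i: "is_kernel C i d" and "finite I"
    and ks: "\<forall>x\<in>I. is_section C (ks x) \<and> cdm (ks x) = cdm i \<and> factors_through C i (ks x)"
    and j: "is_intersection C (cdm i) I ks j"
  shows "is_section C j"
  using assms(3-)
proof (induction I arbitrary: j rule: finite_induct)
  case empty
  have "factors_through C (ide (cdm i)) j" "mono C j" "cdm j = cdm i"
    using empty.prems(2) mono_if_left_inverse[of "ide (cdm i)" "ide (cdm i)"]
    unfolding is_intersection_def by auto
  moreover have "factors_through C j (ide (cdm i))" using factors_throughI[of "j" "ide (cdm i)"] calculation
    by simp
  ultimately show ?case
    using section_if_factors_mutually is_sectionI[of "ide (cdm i)" "ide (cdm i)"] by simp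
next
  case (insert a F)
  have di: "dm d = cdm i" using kernel_cod[OF i] by simp
  have parts_mono: "\<forall>x\<in>insert a F. mono C (ks x)" using insert.prems(1) section_is_mono by blast
  obtain j' where j': "is_intersection C (cdm i) F ks j'"
    using finite_intersection_exists[OF insert.hyps(1)] insert.prems(1) section_is_mono by blast
  have j'_section: "is_section C j'" using insert.IH[OF _ j'] insert.prems(1) by blast
  have cj': "cdm j' = cdm i" using j' unfolding is_intersection_def by blast
  have j: "mono C j" "cdm j = cdm i" "\<forall>x\<in>insert a F. factors_through C j (ks x)"
    using insert.prems(2) unfolding is_intersection_def by auto
  have a: "is_section C (ks a)" "cdm (ks a) = cdm i" "factors_through C i (ks a)"
    using insert.prems(1) by auto
  obtain p where p: "dm p = cdm i" "cdm p = cdm i"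
    and p_below: "\<And>y. cdm y = cdm i \<Longrightarrow> factors_through C (p \<cdot> y) (ks a) \<Longrightarrow> factors_through C y (ks a)"
    and p_kills: "\<And>y. cdm y = cdm i \<Longrightarrow> factors_through C y (ks a) \<Longrightarrow> is_zero (p \<cdot> y)"
    using complement_projectionE[OF a(1)] a(2) by metis
  show ?case
  proof (rule self_F_split_meet_is_section[OF split i j'_section cj' p])
    fix y assume y: "cdm y = cdm i" "is_zero (d \<cdot> (p \<cdot> y))"
    then have "factors_through C (p \<cdot> y) i" using factors_through_kernel_iff[OF i] p di by simp
    then show "factors_through C y (ks a)" using p_below y(1) factors_through_trans a(3) by blast
  next
    show "mono C j" using j by blast
    show "factors_through C j j'" using intersection_factor[OF j' _ j(2)] parts_mono j(3) by blast
    show "is_zero (d \<cdot> (p \<cdot> j))" using p_kills[of j] comp_is_zero[of "p \<cdot> j" d] j p di by simp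
  next
    fix y assume y: "cdm y = cdm i" "factors_through C y j'" "factors_through C y (ks a)"
    have "\<forall>x\<in>F. factors_through C y (ks x)"
      using j' y(2) factors_through_trans unfolding is_intersection_def by blast
    then show "factors_through C y j" using intersection_factor[OF insert.prems(2) parts_mono] y by simp
  qed
qed

lemma self_F_split_finite_intersection:
  assumes split: "self_F_split b C i d" and i: "is_kernel C i d" "mono C i" and "finite I"
    and ks: "\<forall>x\<in>I. direct_summand b C (cdm i) (ks x) \<and> factors_through C i (ks x)"
    and j: "is_intersection C (cdm i) I ks j"
  shows "direct_summand b C (cdm i) j \<and> factors_through C i j"
proof -
  have "is_section C j"
    using self_F_split_finite_intersection_section[OF split i(1) \<open>finite I\<close> _ j] ks
    unfolding direct_summand_def by blast
  moreover have "b \<longrightarrow> fully_invariant C j"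
    using fully_invariant_intersection[OF j] ks unfolding direct_summand_def by blast
  moreover have "factors_through C i j"
    using j i(2) ks unfolding is_intersection_def by blast
  ultimately show ?thesis using j unfolding direct_summand_def is_intersection_def by blast
qed

lemma cokernel_of_comp_epi:
  assumes c: "is_cokernel C c (f \<cdot> e)" and e: "epi C e" "cdm e = dm f"
  shows "is_cokernel C c f"
  unfolding is_cokernel_def
proof (intro conjI allI impI)
  show dc: "dm c = cdm f" using cokernel_dom[OF c] e by simp
  have "is_zero ((c \<cdot> f) \<cdot> e)" using cokernel_zero[OF c] comp_assoc[of e f c] e dc by simp
  then show "is_zero (c \<cdot> f)" using zero_if_comp_epi[OF e(1)] e dc by simp
  fix g assume g: "dm g = cdm f \<and> is_zero (g \<cdot> f)"
  then have "dm g = cdm (f \<cdot> e) \<and> is_zero (g \<cdot> (f \<cdot> e))"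
    using is_zero_comp[of "g \<cdot> f" e] comp_assoc[of e f g] e by simp
  then show "\<exists>!u. hom C (cdm c) (cdm g) u \<and> u \<cdot> c = g" using c unfolding is_cokernel_def by blast
qed


lemma join_is_section:
  assumes q: "is_cokernel C q k" and s: "dm s = cdm q" "cdm s = cdm k" "q \<cdot> s = ide (cdm q)"
    and w: "cdm w = cdm k"
    and c: "is_cokernel C c (s \<cdot> (q \<cdot> w))" "is_retraction C c"
    and j: "mono C j" "factors_through C w j" "factors_through C k j"
    and j_univ: "\<And>m. mono C m \<Longrightarrow> factors_through C w m \<Longrightarrow> factors_through C k m \<Longrightarrow>
      factors_through C j m"
  shows "is_section C j"
proof -
  have dq: "dm q = cdm k" using cokernel_dom[OF q] .
  have dc: "dm c = cdm k" using cokernel_dom[OF c(1)] s w dq by simp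
  obtain c' where c': "is_cokernel C c' (q \<cdot> w)" using ex_cokernel by blast
  have dc': "dm c' = cdm q" using cokernel_dom[OF c'] w dq by simp
  obtain \<kappa> where \<kappa>: "is_kernel C \<kappa> (c' \<cdot> q)" using ex_kernel by blast
  note join = join_as_kernel[OF q c' \<kappa> w]
  have "dm (c \<cdot> s) = cdm (q \<cdot> w)" using s w dq dc by simp
  moreover have "is_zero ((c \<cdot> s) \<cdot> (q \<cdot> w))"
    using cokernel_zero[OF c(1)] comp_assoc[of "q \<cdot> w" s c] s w dq dc by simp
  ultimately obtain u where u: "dm u = cdm c'" "cdm u = cdm (c \<cdot> s)" "u \<cdot> c' = c \<cdot> s"
    by (rule cokernel_factorE[OF c'])
  have "dm (c' \<cdot> q) = cdm (s \<cdot> (q \<cdot> w))" using s w dq dc' by simp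
  moreover have "is_zero ((c' \<cdot> q) \<cdot> (s \<cdot> (q \<cdot> w)))"
  proof -
    have "q \<cdot> (s \<cdot> (q \<cdot> w)) = (q \<cdot> s) \<cdot> (q \<cdot> w)"
      by (rule comp_assoc[symmetric]) (use s w dq in simp_all)
    then have qsqw: "q \<cdot> (s \<cdot> (q \<cdot> w)) = q \<cdot> w" using s w dq by simp
    have "(c' \<cdot> q) \<cdot> (s \<cdot> (q \<cdot> w)) = c' \<cdot> (q \<cdot> (s \<cdot> (q \<cdot> w)))"
      by (rule comp_assoc) (use s w dq dc' in simp_all)
    then show ?thesis using cokernel_zero[OF c'] qsqw by simp
  qed
  ultimately obtain v where v: "dm v = cdm c" "cdm v = cdm (c' \<cdot> q)" "v \<cdot> c = c' \<cdot> q"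
    by (rule cokernel_factorE[OF c(1)])
  have du: "dm u = cdm c'" and cu: "cdm u = cdm c" and dv: "dm v = cdm c" and cv: "cdm v = cdm c'"
    using u v s dc dc' by simp_all
  have "(v \<cdot> u) \<cdot> c' = v \<cdot> (c \<cdot> s)" using u comp_assoc[of c' u v] du cu dv by simp
  also have "\<dots> = (c' \<cdot> q) \<cdot> s" using v comp_assoc[of s c v] s dc dv by simp
  also have "\<dots> = c' \<cdot> (q \<cdot> s)" using comp_assoc[of s q c'] s dq dc' by simp
  also have "\<dots> = ide (cdm c') \<cdot> c'" using s dc' by simp
  finally have vu: "v \<cdot> u = ide (cdm c')"
    by (rule epi_cancel[OF cokernel_is_epi[OF c']]) (use du cu dv cv in simp_all)
  obtain \<sigma> where \<sigma>: "dm \<sigma> = cdm c" "cdm \<sigma> = dm c" "c \<cdot> \<sigma> = ide (cdm c)"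
    using c(2) by (rule is_retractionE)
  have "(c' \<cdot> q) \<cdot> (\<sigma> \<cdot> u) = (v \<cdot> c) \<cdot> (\<sigma> \<cdot> u)" using v(3) by simp
  also have "\<dots> = v \<cdot> (c \<cdot> (\<sigma> \<cdot> u))" by (rule comp_assoc) (use \<sigma> cu dv in simp_all)
  also have "\<dots> = v \<cdot> u" using comp_assoc[of u \<sigma> c, symmetric] \<sigma> cu by simp
  finally have "(c' \<cdot> q) \<cdot> (\<sigma> \<cdot> u) = ide (cdm (c' \<cdot> q))" using vu dc' by simp
  moreover have "cdm (\<sigma> \<cdot> u) = dm (c' \<cdot> q)" using \<sigma> u dc dq dc' s by simp
  ultimately obtain \<rho> where \<rho>: "dm \<rho> = dm (c' \<cdot> q)" "cdm \<rho> = dm \<kappa>" "\<rho> \<cdot> \<kappa> = ide (dm \<kappa>)"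
    "is_zero (\<rho> \<cdot> (\<sigma> \<cdot> u))"
    by (rule kernel_of_retraction_splits[OF _ _ \<kappa>])
  have "is_section C \<kappa>" using is_sectionI[of \<kappa> \<rho>] \<rho> kernel_cod[OF \<kappa>] by simp
  then show ?thesis
    using section_if_factors_mutually[OF j(1) j_univ[OF kernel_is_mono[OF \<kappa>] join(1,2)] join(3)[OF j]]
    by blast
qed

lemma dual_self_F_split_sum_with_summand:
  assumes split: "dual_self_F_split b C i d" and i: "fully_invariant C i"
    and k: "direct_summand b C (cdm i) k"
    and s: "is_sum C (cdm i) {0::nat, 1} (\<lambda>x. if x = 0 then i else k) s"
  shows "direct_summand b C (cdm i) s"
proof -
  have k': "is_section C k" "cdm k = cdm i" "b \<longrightarrow> fully_invariant C k"
    using k unfolding direct_summand_def by auto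
  have s': "mono C s" "cdm s = cdm i" "factors_through C i s" "factors_through C k s"
    using s unfolding is_sum_def by (auto dest: bspec[of _ _ 0] bspec[of _ _ 1])
  obtain t where t: "dm t = cdm k" "cdm t = dm k" "t \<cdot> k = ide (dm k)" using k'(1) by (rule is_sectionE)
  obtain q where q: "is_cokernel C q k" using ex_cokernel by blast
  have dq: "dm q = cdm i" using cokernel_dom[OF q] k' by simp
  obtain r where r: "dm r = cdm q" "cdm r = cdm k" "q \<cdot> r = ide (cdm q)" "is_zero (t \<cdot> r)"
    by (rule cokernel_of_section_splits[OF t(3) _ q]) (use t in simp)
  obtain c where c: "is_cokernel C c ((r \<cdot> q) \<cdot> i)" using ex_cokernel by blast
  have retraction: "is_retraction C c"
    using split[unfolded dual_self_F_split_def hom_def, rule_format, of "r \<cdot> q" c] c r dq k' by simp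
  have c': "is_cokernel C c (r \<cdot> (q \<cdot> i))" using c comp_assoc[of i q r] r dq by simp
  have "is_section C s"
  proof (rule join_is_section[OF q r(1-3) _ c' retraction s'(1,3,4)])
    show "cdm i = cdm k" using k' by simp
    fix m assume m: "mono C m" "factors_through C i m" "factors_through C k m"
    then have "\<forall>x\<in>{0::nat, 1}. factors_through C (if x = 0 then i else k) m" by simp
    then show "factors_through C s m"
      using s m factors_through_cod[OF m(2)] unfolding is_sum_def by auto
  qed
  moreover have "b \<longrightarrow> fully_invariant C s" using fully_invariant_sum[OF s] i k'(3) by auto
  ultimately show ?thesis using s' unfolding direct_summand_def by simp
qed

lemma dual_self_F_split_finite_sum_section:
  assumes split: "dual_self_F_split b C i d" and "finite I"
    and ks: "\<forall>x\<in>I. is_section C (ks x) \<and> cdm (ks x) = cdm i \<and> factors_through C (ks x) i"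
    and s: "is_sum C (cdm i) I ks s"
  shows "is_section C s"
  using assms(2-)
proof (induction I arbitrary: s rule: finite_induct)
  case empty
  obtain z where z: "zero_obj C z" using ex_zero_obj by blast
  obtain n where n: "dm n = z" "cdm n = cdm i" using zero_obj_ex_from[OF z] by blast
  have "mono C s" "factors_through C s n" "factors_through C n s"
    using empty.prems(2) zero_subobject[OF z n] n(2) unfolding is_sum_def by auto
  then show ?case using section_if_factors_mutually zero_subobject(2)[OF z n] by blast
next
  case (insert a F)
  have s: "mono C s" "cdm s = cdm i" "\<forall>x\<in>insert a F. factors_through C (ks x) s"
    using insert.prems(2) unfolding is_sum_def by auto
  obtain s' where s': "is_sum C (cdm i) F ks s'"
    using finite_sum_exists[OF insert.hyps(1)] insert.prems(1) by blast
  have "is_section C s'" using insert.IH[OF _ s'] insert.prems(1) by blast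
  then obtain t where t: "dm t = cdm s'" "cdm t = dm s'" "t \<cdot> s' = ide (dm s')"
    by (rule is_sectionE)
  have cs': "cdm s' = cdm i" using s' unfolding is_sum_def by blast
  obtain q where q: "is_cokernel C q s'" using ex_cokernel by blast
  have dq: "dm q = cdm i" using cokernel_dom[OF q] cs' by simp
  obtain r where r: "dm r = cdm q" "cdm r = cdm s'" "q \<cdot> r = ide (cdm q)" "is_zero (t \<cdot> r)"
    by (rule cokernel_of_section_splits[OF t(3) _ q]) (use t in simp)
  define w where "w = ks a"
  have w: "is_section C w" "cdm w = cdm i" "factors_through C w i" using insert.prems(1) w_def by auto
  obtain tw where tw: "dm tw = cdm w" "cdm tw = dm w" "tw \<cdot> w = ide (dm w)"
    using w(1) by (rule is_sectionE)
  obtain a' where a': "dm a' = dm w" "cdm a' = dm i" "i \<cdot> a' = w" using w(3) by (rule factors_throughE)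
  txt \<open>\<open>g \<cdot> i = (r \<cdot> q \<cdot> w) \<cdot> (tw \<cdot> i)\<close> with \<open>tw \<cdot> i\<close> epic, so \<open>g \<cdot> i\<close> and \<open>r \<cdot> q \<cdot> w\<close> have the
    same cokernel.\<close>
  define g where "g = r \<cdot> (q \<cdot> (w \<cdot> tw))"
  have g: "dm g = cdm i" "cdm g = cdm i" using g_def r tw w dq cs' by simp_all
  obtain c where c: "is_cokernel C c (g \<cdot> i)" using ex_cokernel by blast
  have retraction: "is_retraction C c"
    using split[unfolded dual_self_F_split_def hom_def, rule_format, of g c] c g by simp
  have "(tw \<cdot> i) \<cdot> a' = ide (dm w)" using comp_assoc[of a' i tw] a' tw w by simp
  then have "epi C (tw \<cdot> i)" using epi_if_right_inverse[of "tw \<cdot> i" a'] a' tw w by simp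
  moreover have "g \<cdot> i = (r \<cdot> (q \<cdot> w)) \<cdot> (tw \<cdot> i)"
    using g_def r tw w dq cs' comp_assoc[of i tw w] comp_assoc[of i "w \<cdot> tw" q]
      comp_assoc[of i "q \<cdot> (w \<cdot> tw)" r] comp_assoc[of "tw \<cdot> i" w q]
      comp_assoc[of "tw \<cdot> i" "q \<cdot> w" r] by simp
  ultimately have c': "is_cokernel C c (r \<cdot> (q \<cdot> w))"
    using cokernel_of_comp_epi[of c "r \<cdot> (q \<cdot> w)" "tw \<cdot> i"] c tw r w dq cs' by simp
  have s's: "factors_through C s' s"
    using s' s unfolding is_sum_def by blast
  show ?case
  proof (rule join_is_section[OF q r(1-3) _ c' retraction s(1) _ s's])
    show "cdm w = cdm s'" using w cs' by simp
    show "factors_through C w s" using s w_def by simp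
    fix m assume m: "mono C m" "factors_through C w m" "factors_through C s' m"
    have "\<forall>x\<in>insert a F. factors_through C (ks x) m"
      using m w_def s' factors_through_trans unfolding is_sum_def by blast
    then show "factors_through C s m"
      using insert.prems(2) m factors_through_cod[OF m(3)] cs' unfolding is_sum_def by auto
  qed
qed

lemma dual_self_F_split_finite_sum:
  assumes split: "dual_self_F_split b C i d" and i: "mono C i" and "finite I"
    and ks: "\<forall>x\<in>I. direct_summand b C (cdm i) (ks x) \<and> factors_through C (ks x) i"
    and s: "is_sum C (cdm i) I ks s"
  shows "direct_summand b C (cdm i) s \<and> factors_through C s i"
proof -
  have "is_section C s"
    using dual_self_F_split_finite_sum_section[OF split \<open>finite I\<close> _ s] ks
    unfolding direct_summand_def by blast
  moreover have "b \<longrightarrow> fully_invariant C s"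
    using fully_invariant_sum[OF s] ks unfolding direct_summand_def by blast
  moreover have "factors_through C s i"
    using s i ks unfolding is_sum_def by blast
  ultimately show ?thesis using s unfolding direct_summand_def is_sum_def by blast
qed

end

theorem corollary3p7:
  fixes C :: "('o, 'm) cat" and i d :: 'm
  assumes "abelian_cat C"
    and "short_exact C i d"
    and "fully_invariant C i"
  shows "\<forall>b::bool.
     (self_F_split b C i d \<longrightarrow>
        (\<forall>k j. direct_summand b C (Cod C i) k
              \<and> is_intersection C (Cod C i) {0::nat, 1} (\<lambda>x. if x = 0 then i else k) j
              \<longrightarrow> direct_summand b C (Cod C i) j)
      \<and> (\<forall>(I::nat set) ks j. finite I
              \<and> (\<forall>x\<in>I. direct_summand b C (Cod C i) (ks x) \<and> factors_through C i (ks x))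
              \<and> is_intersection C (Cod C i) I ks j
              \<longrightarrow> direct_summand b C (Cod C i) j \<and> factors_through C i j))
   \<and> (dual_self_F_split b C i d \<longrightarrow>
        (\<forall>k s. direct_summand b C (Cod C i) k
              \<and> is_sum C (Cod C i) {0::nat, 1} (\<lambda>x. if x = 0 then i else k) s
              \<longrightarrow> direct_summand b C (Cod C i) s)
      \<and> (\<forall>(I::nat set) ks s. finite I
              \<and> (\<forall>x\<in>I. direct_summand b C (Cod C i) (ks x) \<and> factors_through C (ks x) i)
              \<and> is_sum C (Cod C i) I ks s
              \<longrightarrow> direct_summand b C (Cod C i) s \<and> factors_through C s i))"
proof -
  interpret abelian_category C using assms(1) by (rule abelian_category.intro)
  have i: "is_kernel C i d" "mono C i" using assms(2) unfolding short_exact_def by auto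
  show ?thesis
    by (intro allI conjI impI; elim conjE)
      (blast intro: self_F_split_intersection_with_summand[OF _ i(1) assms(3)]
         dual_self_F_split_sum_with_summand[OF _ assms(3)]
         dest: self_F_split_finite_intersection[OF _ i] dual_self_F_split_finite_sum[OF _ i(2)])+
qed

end
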